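(* Let $(M,F)$ be a conic pseudo-Riemannian surface and $\overline F=e^\phi F$ an anisotropic conformal change such that $\phi_{;2}$ is horizontally constant. Then $\overline F$ is Landsberg if and only if either $\overline F$ satisfies the $T$-condition ($\overline{\mathcal I}_{;2}=0$) or $\phi_{;2}\phi_{,1}=\phi_{,2}$.
   Context: Throughout, $M$ is a smooth $2$-dimensional manifold, $TM_0$ its slit tangent bundle with induced local coordinates $(x^i,y^i)$, $\partial_i=\partial/\partial x^i$, $\dot\partial_i=\partial/\partial y^i$. A function is called $h(r)$ if it is positively homogeneous of degree $r$ in $y$. A conic pseudo-Finsler surface $(M,F)$ consists of a conic subbundle $\mathcal A\subset TM_0$ (an open set invariant under $y\mapsto\lambda y$, $\lambda>0$, projecting onto $M$) and a smooth $h(1)$ function $F:\mathcal A\to\mathbb R$ such that $g_{ij}=\frac12\dot\partial_i\dot\partial_jF^2$ is nondegenerate. Put $\ell_i=\dot\partial_iF$, $\ell^i=y^i/F$. Modified Berwald frame: $\varepsilon\in\{1,-1\}$ and a covector $m_i$ satisfy $g_{ij}=\ell_i\ell_j+\varepsilon m_im_j$, $m^i=g^{ij}m_j$, so $\ell^i\ell_i=1$, $\ell^im_i=0$, $m^im_i=\varepsilon$. The main scalar $\mathcal I$ ($h(0)$) is defined by $FC_{ijk}=\mathcal I\,m_im_jm_k$, where $C_{ijk}=\frac14\dot\partial_i\dot\partial_j\dot\partial_kF^2$. The geodesic spray of $F$ is $S=y^i\partial_i-2G^i\dot\partial_i$; $G^i_j=\dot\partial_jG^i$, $\delta_i=\partial_i-G^j_i\dot\partial_j$.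 For a smooth function $f$: $f_{;1}=y^i\dot\partial_if$, $f_{;2}=\varepsilon Fm^i\dot\partial_if$, $f_{,1}=\ell^i\delta_if$, $f_{,2}=\varepsilon m^i\delta_if$; iterated derivatives are read left to right. $f$ is horizontally constant if $\delta_if=0$ (i.e. $f_{,1}=f_{,2}=0$). $F$ is (conic pseudo-)Riemannian if $F^2$ is quadratic in $y$, equivalently $\mathcal I\equiv0$. Anisotropic conformal change: $\phi$ is a smooth $h(0)$ function on $\mathcal A$ with $F^2(\dot\partial_i\dot\partial_j\phi+\dot\partial_i\phi\,\dot\partial_j\phi)m^im^j+\varepsilon\ne0$, and $\overline F=e^{\phi}F$. Set $\sigma=\phi_{;2;2}+\varepsilon\mathcal I\phi_{;2}+2(\phi_{;2})^2$, $\rho=1/(\sigma+\varepsilon-(\phi_{;2})^2)$ (with $\varepsilon\rho>0$), $2Q=\varepsilon\rho F^2(\phi_{;2}\phi_{,1}+\phi_{,1;2}-2\phi_{,2})$, $2P=-\rho F^2\phi_{;2}(\phi_{;2}\phi_{,1}+\phi_{,1;2}-2\phi_{,2})+F^2\phi_{,1}$. The spray coefficients of $\overline F$ are $\overline G^i=G^i+Qm^i+P\ell^i$, $\overline S=y^i\partial_i-2\overline G^i\dot\partial_i$, and the main scalar of $\overline F$ is $\overline{\mathcal I}=\sqrt{\varepsilon\rho}[\mathcal I+2\varepsilon\phi_{;2}-\frac\varepsilon2(\ln\rho)_{;2}]$; $\overline{\mathcal I}_{;2}$ is taken with respect to $F$. $\overline F$ is Landsberg iff $\overline S(\overline{\mathcal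 I})=0$; satisfies the $T$-condition iff $\overline{\mathcal I}_{;2}=0$. *)

theory Defs
  imports "HOL-Analysis.Analysis"
begin

text \<open>A point of the slit tangent bundle over a coordinate
chart of the surface M is a pair (x,y) with x, y in R^2 (induced coordinates
(x^i,y^i)).\<close>

type_synonym pt = "(real^2) \<times> (real^2)"

definition pdx :: "2 \<Rightarrow> (pt \<Rightarrow> real) \<Rightarrow> pt \<Rightarrow> real" where
  "pdx i f p = deriv (\<lambda>t. f (p + (t *\<^sub>R axis i 1, 0))) 0"

definition pdy :: "2 \<Rightarrow> (pt \<Rightarrow> real) \<Rightarrow> pt \<Rightarrow> real" where
  "pdy i f p = deriv (\<lambda>t. f (p + (0, t *\<^sub>R axis i 1))) 0"

fun iterd :: "(bool \<times> 2) list \<Rightarrow> (pt \<Rightarrow> real) \<Rightarrow> pt \<Rightarrow> real" where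
  "iterd [] f = f"
| "iterd ((b,i) # os) f = (if b then pdy i else pdx i) (iterd os f)"

definition fsmooth_on :: "pt set \<Rightarrow> (pt \<Rightarrow> real) \<Rightarrow> bool" where
  "fsmooth_on A f \<longleftrightarrow> (\<forall>os. iterd os f differentiable_on A)"

definition conic_set :: "pt set \<Rightarrow> bool" where
  "conic_set A \<longleftrightarrow> open A \<and> A \<noteq> {} \<and> (\<forall>p\<in>A. snd p \<noteq> 0) \<and>
     (\<forall>x y (c::real). (x,y) \<in> A \<longrightarrow> c > 0 \<longrightarrow> (x, c *\<^sub>R y) \<in> A)"

definition homog :: "real \<Rightarrow> pt set \<Rightarrow> (pt \<Rightarrow> real) \<Rightarrow> bool" where
  "homog r A f \<longleftrightarrow> (\<forall>x y (c::real). (x,y) \<in> A \<longrightarrow> c > 0 \<longrightarrow>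
       f (x, c *\<^sub>R y) = c powr r * f (x,y))"

definition Fsq :: "(pt \<Rightarrow> real) \<Rightarrow> pt \<Rightarrow> real" where
  "Fsq F = (\<lambda>q. (F q)\<^sup>2)"

definition gmet :: "(pt \<Rightarrow> real) \<Rightarrow> 2 \<Rightarrow> 2 \<Rightarrow> pt \<Rightarrow> real" where
  "gmet F i j p = 1/2 * pdy i (pdy j (Fsq F)) p"

definition gmat :: "(pt \<Rightarrow> real) \<Rightarrow> pt \<Rightarrow> real^2^2" where
  "gmat F p = (\<chi> i j. gmet F i j p)"

definition ginv :: "(pt \<Rightarrow> real) \<Rightarrow> 2 \<Rightarrow> 2 \<Rightarrow> pt \<Rightarrow> real" where
  "ginv F i j p = matrix_inv (gmat F p) $ i $ j"

definition ell_lo :: "(pt \<Rightarrow> real) \<Rightarrow> 2 \<Rightarrow> pt \<Rightarrow> real" where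
  "ell_lo F i p = pdy i F p"

definition ell_up :: "(pt \<Rightarrow> real) \<Rightarrow> 2 \<Rightarrow> pt \<Rightarrow> real" where
  "ell_up F i p = snd p $ i / F p"

definition m_up :: "(pt \<Rightarrow> real) \<Rightarrow> (2 \<Rightarrow> pt \<Rightarrow> real) \<Rightarrow> 2 \<Rightarrow> pt \<Rightarrow> real" where
  "m_up F m i p = (\<Sum>j\<in>UNIV. ginv F i j p * m j p)"

definition cartan :: "(pt \<Rightarrow> real) \<Rightarrow> 2 \<Rightarrow> 2 \<Rightarrow> 2 \<Rightarrow> pt \<Rightarrow> real" where
  "cartan F i j k p = 1/4 * pdy i (pdy j (pdy k (Fsq F))) p"

definition main_scalar :: "(pt \<Rightarrow> real) \<Rightarrow> (2 \<Rightarrow> pt \<Rightarrow> real) \<Rightarrow> pt \<Rightarrow> real" where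
  "main_scalar F m p = (THE c. \<forall>i j k. F p * cartan F i j k p = c * m i p * m j p * m k p)"

definition spray :: "(pt \<Rightarrow> real) \<Rightarrow> 2 \<Rightarrow> pt \<Rightarrow> real" where
  "spray F i p = 1/4 * (\<Sum>l\<in>UNIV. ginv F i l p *
      ((\<Sum>k\<in>UNIV. snd p $ k * pdx k (pdy l (Fsq F)) p) - pdx l (Fsq F) p))"

definition nlconn :: "(pt \<Rightarrow> real) \<Rightarrow> 2 \<Rightarrow> 2 \<Rightarrow> pt \<Rightarrow> real" where
  "nlconn F j i p = pdy i (spray F j) p"

definition hdelta :: "(pt \<Rightarrow> real) \<Rightarrow> 2 \<Rightarrow> (pt \<Rightarrow> real) \<Rightarrow> pt \<Rightarrow> real" where
  "hdelta F i f p = pdx i f p - (\<Sum>j\<in>UNIV. nlconn F j i p * pdy j f p)"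

text \<open>Berwald-frame derivatives f_{;1}, f_{;2}, f_{,1}, f_{,2}.\<close>
definition vd1 :: "(pt \<Rightarrow> real) \<Rightarrow> pt \<Rightarrow> real" where
  "vd1 f p = (\<Sum>i\<in>UNIV. snd p $ i * pdy i f p)"

definition vd2 :: "(pt \<Rightarrow> real) \<Rightarrow> real \<Rightarrow> (2 \<Rightarrow> pt \<Rightarrow> real) \<Rightarrow> (pt \<Rightarrow> real) \<Rightarrow> pt \<Rightarrow> real" where
  "vd2 F eps m f p = eps * F p * (\<Sum>i\<in>UNIV. m_up F m i p * pdy i f p)"

definition hd1 :: "(pt \<Rightarrow> real) \<Rightarrow> (pt \<Rightarrow> real) \<Rightarrow> pt \<Rightarrow> real" where
  "hd1 F f p = (\<Sum>i\<in>UNIV. ell_up F i p * hdelta F i f p)"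

definition hd2 :: "(pt \<Rightarrow> real) \<Rightarrow> real \<Rightarrow> (2 \<Rightarrow> pt \<Rightarrow> real) \<Rightarrow> (pt \<Rightarrow> real) \<Rightarrow> pt \<Rightarrow> real" where
  "hd2 F eps m f p = eps * (\<Sum>i\<in>UNIV. m_up F m i p * hdelta F i f p)"

definition berwald_frame :: "pt set \<Rightarrow> (pt \<Rightarrow> real) \<Rightarrow> real \<Rightarrow> (2 \<Rightarrow> pt \<Rightarrow> real) \<Rightarrow> bool" where
  "berwald_frame A F eps m \<longleftrightarrow> (eps = 1 \<or> eps = -1) \<and> (\<forall>i. fsmooth_on A (m i)) \<and>
     (\<forall>p\<in>A. \<forall>i j. gmet F i j p = ell_lo F i p * ell_lo F j p + eps * m i p * m j p)"

definition pseudo_finsler :: "pt set \<Rightarrow> (pt \<Rightarrow> real) \<Rightarrow> bool" where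
  "pseudo_finsler A F \<longleftrightarrow> conic_set A \<and> fsmooth_on A F \<and> homog 1 A F \<and>
     (\<forall>p\<in>A. F p \<noteq> 0) \<and> (\<forall>p\<in>A. det (gmat F p) \<noteq> 0)"

definition pseudo_riemannian :: "pt set \<Rightarrow> (pt \<Rightarrow> real) \<Rightarrow> bool" where
  "pseudo_riemannian A F \<longleftrightarrow> pseudo_finsler A F \<and>
     (\<exists>a :: real^2 \<Rightarrow> real^2^2. \<forall>x y. (x,y) \<in> A \<longrightarrow>
        (F (x,y))\<^sup>2 = (\<Sum>i\<in>UNIV. \<Sum>j\<in>UNIV. a x $ i $ j * y $ i * y $ j))"

text \<open>Quantities of the anisotropic conformal change Fbar = e^phi F.\<close>
definition cc_sigma where
  "cc_sigma F eps m phi p = vd2 F eps m (vd2 F eps m phi) p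
     + eps * main_scalar F m p * vd2 F eps m phi p + 2 * (vd2 F eps m phi p)\<^sup>2"

definition cc_rho where
  "cc_rho F eps m phi p = 1 / (cc_sigma F eps m phi p + eps - (vd2 F eps m phi p)\<^sup>2)"

definition cc_Q where
  "cc_Q F eps m phi p = 1/2 * (eps * cc_rho F eps m phi p * (F p)\<^sup>2 *
     (vd2 F eps m phi p * hd1 F phi p + vd2 F eps m (hd1 F phi) p - 2 * hd2 F eps m phi p))"

definition cc_P where
  "cc_P F eps m phi p = 1/2 * (- cc_rho F eps m phi p * (F p)\<^sup>2 * vd2 F eps m phi p *
     (vd2 F eps m phi p * hd1 F phi p + vd2 F eps m (hd1 F phi) p - 2 * hd2 F eps m phi p)
     + (F p)\<^sup>2 * hd1 F phi p)"

definition cc_spray where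
  "cc_spray F eps m phi i p = spray F i p + cc_Q F eps m phi p * m_up F m i p
     + cc_P F eps m phi p * ell_up F i p"

definition cc_S where
  "cc_S F eps m phi f p = (\<Sum>i\<in>UNIV. snd p $ i * pdx i f p)
     - 2 * (\<Sum>i\<in>UNIV. cc_spray F eps m phi i p * pdy i f p)"

text \<open>Main scalar of Fbar; (ln rho)_{;2} is read as (ln |rho|)_{;2} = rho_{;2}/rho.\<close>
definition cc_Ibar where
  "cc_Ibar F eps m phi p = sqrt (eps * cc_rho F eps m phi p) *
     (main_scalar F m p + 2 * eps * vd2 F eps m phi p
      - eps / 2 * vd2 F eps m (\<lambda>q. ln \<bar>cc_rho F eps m phi q\<bar>) p)"

definition conf_factor where
  "conf_factor A F eps m phi \<longleftrightarrow> fsmooth_on A phi \<and> homog 0 A phi \<and>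
     (\<forall>p\<in>A. (F p)\<^sup>2 * (\<Sum>i\<in>UNIV. \<Sum>j\<in>UNIV.
        (pdy i (pdy j phi) p + pdy i phi p * pdy j phi p) * m_up F m i p * m_up F m j p) + eps \<noteq> 0) \<and>
     (\<forall>p\<in>A. eps * cc_rho F eps m phi p > 0)"

definition horiz_const :: "pt set \<Rightarrow> (pt \<Rightarrow> real) \<Rightarrow> (pt \<Rightarrow> real) \<Rightarrow> bool" where
  "horiz_const A F f \<longleftrightarrow> (\<forall>p\<in>A. \<forall>i. hdelta F i f p = 0)"

definition landsberg_cc where
  "landsberg_cc A F eps m phi \<longleftrightarrow> (\<forall>p\<in>A. cc_S F eps m phi (cc_Ibar F eps m phi) p = 0)"

end

theory Submission
  imports Defs
begin

text \<open>For a Riemannian \<open>F\<close> the main scalar vanishes, so the main scalar \<open>Ibar\<close> of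
  \<open>Fbar = e\<^sup>\<phi> F\<close> is a smooth function of \<open>\<phi>\<^sub>;\<^sub>2\<close>, \<open>\<phi>\<^sub>;\<^sub>2\<^sub>;\<^sub>2\<close> and \<open>\<phi>\<^sub>;\<^sub>2\<^sub>;\<^sub>2\<^sub>;\<^sub>2\<close> alone. For a
  Riemannian metric the vertical derivative \<open>;2\<close> commutes with the horizontal derivatives
  \<open>\<delta>\<^sub>i\<close> and with the Liouville derivative \<open>;1\<close>, so these three functions are horizontally
  constant and \<open>0\<close>-homogeneous as soon as \<open>\<phi>\<^sub>;\<^sub>2\<close> is horizontally constant, and then so is
  \<open>Ibar\<close>. On such a function the spray \<open>Sbar = S - 2Q m\<^sup>i\<partial>\<^sub>i - 2P \<ell>\<^sup>i\<partial>\<^sub>i\<close> only sees \<open>Q\<close>,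
  and since \<open>(\<phi>\<^sub>,\<^sub>1)\<^sub>;\<^sub>2 = \<phi>\<^sub>,\<^sub>2 + (\<phi>\<^sub>;\<^sub>2)\<^sub>,\<^sub>1 = \<phi>\<^sub>,\<^sub>2\<close> this gives
  \<open>Sbar(Ibar) = -\<rho> F (\<phi>\<^sub>;\<^sub>2 \<phi>\<^sub>,\<^sub>1 - \<phi>\<^sub>,\<^sub>2) Ibar\<^sub>;\<^sub>2\<close>, which vanishes iff one of the two factors
  does.\<close>

section \<open>Directional derivatives\<close>

definition dir_deriv :: "'a::real_normed_vector \<Rightarrow> ('a \<Rightarrow> real) \<Rightarrow> 'a \<Rightarrow> real" where
  "dir_deriv v f p = deriv (\<lambda>t. f (p + t *\<^sub>R v)) 0"

lemma has_real_derivative_along_line: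
  assumes "(f has_derivative f') (at (a + x *\<^sub>R v))"
  shows "((\<lambda>t. f (a + t *\<^sub>R v)) has_real_derivative f' v) (at x)"
proof -
  have "((\<lambda>t. a + t *\<^sub>R v) has_derivative (\<lambda>t. t *\<^sub>R v)) (at x)"
    by (auto intro!: derivative_eq_intros)
  from has_derivative_compose[OF this assms]
  have "((\<lambda>t. f (a + t *\<^sub>R v)) has_derivative (\<lambda>t. f' (t *\<^sub>R v))) (at x)" .
  moreover have "(\<lambda>t. f' (t *\<^sub>R v)) = (*) (f' v)"
    using has_derivative_bounded_linear[OF assms]
    by (auto simp: fun_eq_iff linear_simps bounded_linear.linear)
  ultimately show ?thesis by (simp add: has_field_derivative_def)
qed

lemma dir_deriv_eqI:
  "((\<lambda>t. f (p + t *\<^sub>R v)) has_real_derivative D) (at 0) \<Longrightarrow> dir_deriv v f p = D"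
  unfolding dir_deriv_def by (rule DERIV_imp_deriv)

lemma dir_deriv_eq:
  assumes "(f has_derivative f') (at p)"
  shows "dir_deriv v f p = f' v"
  by (rule dir_deriv_eqI) (use has_real_derivative_along_line[of f f' p 0 v] assms in simp)

lemma DERIV_dir_deriv:
  assumes "f differentiable (at p)"
  shows "((\<lambda>t. f (p + t *\<^sub>R v)) has_real_derivative dir_deriv v f p) (at 0)"
proof -
  obtain f' where f': "(f has_derivative f') (at p)"
    using assms unfolding differentiable_def by blast
  show ?thesis
    using has_real_derivative_along_line[of f f' p 0 v] f' dir_deriv_eq[OF f'] by simp
qed

lemma linear_dir_deriv:
  assumes "f differentiable (at p)"
  shows "linear (\<lambda>v. dir_deriv v f p)"
proof -
  obtain f' where f': "(f has_derivative f') (at p)"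
    using assms unfolding differentiable_def by blast
  have "(\<lambda>v. dir_deriv v f p) = f'"
    using dir_deriv_eq[OF f'] by auto
  then show ?thesis using has_derivative_linear[OF f'] by simp
qed

lemma dir_deriv_cong:
  assumes "open S" "p \<in> S" "\<And>q. q \<in> S \<Longrightarrow> f q = g q"
  shows "dir_deriv v f p = dir_deriv v g p"
proof -
  have "((\<lambda>t. p + t *\<^sub>R v) \<longlongrightarrow> p + 0 *\<^sub>R v) (nhds 0)"
    by (intro tendsto_intros filterlim_ident)
  then have "eventually (\<lambda>t. p + t *\<^sub>R v \<in> S) (nhds 0)"
    using assms(1,2) by (intro topological_tendstoD) auto
  then have "eventually (\<lambda>t. f (p + t *\<^sub>R v) = g (p + t *\<^sub>R v)) (nhds 0)"
    by eventually_elim (use assms(3) in auto)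
  then show ?thesis unfolding dir_deriv_def by (rule deriv_cong_ev) simp
qed

lemma dir_deriv_const [simp]: "dir_deriv v (\<lambda>q. c) p = 0"
  by (rule dir_deriv_eqI) simp

lemma dir_deriv_add:
  assumes "f differentiable (at p)" "g differentiable (at p)"
  shows "dir_deriv v (\<lambda>q. f q + g q) p = dir_deriv v f p + dir_deriv v g p"
  by (rule dir_deriv_eqI) (intro DERIV_add DERIV_dir_deriv assms)

lemma dir_deriv_diff:
  assumes "f differentiable (at p)" "g differentiable (at p)"
  shows "dir_deriv v (\<lambda>q. f q - g q) p = dir_deriv v f p - dir_deriv v g p"
  by (rule dir_deriv_eqI) (intro DERIV_diff DERIV_dir_deriv assms)

lemma dir_deriv_minus:
  assumes "f differentiable (at p)"
  shows "dir_deriv v (\<lambda>q. - f q) p = - dir_deriv v f p"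
  by (rule dir_deriv_eqI) (intro DERIV_minus DERIV_dir_deriv assms)

lemma dir_deriv_mult:
  assumes "f differentiable (at p)" "g differentiable (at p)"
  shows "dir_deriv v (\<lambda>q. f q * g q) p = dir_deriv v f p * g p + f p * dir_deriv v g p"
  by (rule dir_deriv_eqI)
    (use DERIV_mult[OF DERIV_dir_deriv[OF assms(1)] DERIV_dir_deriv[OF assms(2)]] in \<open>simp add: mult.commute\<close>)

lemma dir_deriv_power:
  assumes "f differentiable (at p)"
  shows "dir_deriv v (\<lambda>q. (f q)^n) p = real n * (f p)^(n - 1) * dir_deriv v f p"
  by (rule dir_deriv_eqI) (use DERIV_power[OF DERIV_dir_deriv[OF assms], where n = n] in \<open>simp add: mult_ac\<close>)

lemma dir_deriv_inverse:
  assumes "f differentiable (at p)" "f p \<noteq> 0"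
  shows "dir_deriv v (\<lambda>q. 1 / f q) p = - dir_deriv v f p / (f p)^2"
  by (rule dir_deriv_eqI)
    (use DERIV_inverse'[OF DERIV_dir_deriv[OF assms(1)]] assms(2)
      in \<open>simp add: inverse_eq_divide power2_eq_square\<close>)

lemma dir_deriv_divide:
  assumes "f differentiable (at p)" "g differentiable (at p)" "g p \<noteq> 0"
  shows "dir_deriv v (\<lambda>q. f q / g q) p = (dir_deriv v f p * g p - f p * dir_deriv v g p) / (g p)^2"
  by (rule dir_deriv_eqI)
    (use DERIV_divide[OF DERIV_dir_deriv[OF assms(1)] DERIV_dir_deriv[OF assms(2)]] assms(3)
      in \<open>simp add: power2_eq_square\<close>)

lemma DERIV_ln_abs:
  assumes "x \<noteq> (0::real)"
  shows "((\<lambda>y. ln \<bar>y\<bar>) has_real_derivative 1 / x) (at x)"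
proof (cases "x > 0")
  case True
  with DERIV_ln_divide[OF True] show ?thesis
    by (rule_tac has_field_derivative_transform_within_open[where S = "{0<..}"]) auto
next
  case False
  with assms have "x < 0" by auto
  moreover have "((\<lambda>y. ln (- y)) has_real_derivative 1 / x) (at x)"
    using DERIV_chain2[OF DERIV_ln_divide[of "-x"] DERIV_minus[OF DERIV_ident]] \<open>x < 0\<close> by simp
  ultimately show ?thesis
    by (rule_tac has_field_derivative_transform_within_open[where S = "{..<0}"]) auto
qed

lemma dir_deriv_ln_abs:
  assumes "f differentiable (at p)" "f p \<noteq> 0"
  shows "dir_deriv v (\<lambda>q. ln \<bar>f q\<bar>) p = dir_deriv v f p / f p"
proof (rule dir_deriv_eqI)
  have "((\<lambda>y. ln \<bar>y\<bar>) has_real_derivative 1 / f p) (at ((\<lambda>t. f (p + t *\<^sub>R v)) 0))"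
    using DERIV_ln_abs[OF assms(2)] by simp
  from DERIV_chain2[OF this DERIV_dir_deriv[OF assms(1)]]
  show "((\<lambda>t. ln \<bar>f (p + t *\<^sub>R v)\<bar>) has_real_derivative dir_deriv v f p / f p) (at 0)"
    by simp
qed

lemma dir_deriv_compose_eq_0:
  assumes g: "(g has_derivative g') (at p)" "g' v = 0"
    and \<Phi>: "\<Phi> differentiable (at (g p))"
  shows "dir_deriv v (\<lambda>q. \<Phi> (g q)) p = 0"
proof -
  obtain \<Phi>' where \<Phi>': "(\<Phi> has_derivative \<Phi>') (at (g p))"
    using \<Phi> unfolding differentiable_def by blast
  have "((\<lambda>q. \<Phi> (g q)) has_derivative (\<lambda>x. \<Phi>' (g' x))) (at p)"
    using has_derivative_compose[OF g(1) \<Phi>'] by (simp add: comp_def)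
  then have "dir_deriv v (\<lambda>q. \<Phi> (g q)) p = \<Phi>' (g' v)"
    by (rule dir_deriv_eq)
  then show ?thesis
    using g(2) linear_0[OF has_derivative_linear[OF \<Phi>']] by simp
qed

lemma second_difference_mean_value:
  fixes f :: "'a::real_normed_vector \<Rightarrow> real"
  assumes "\<And>t. \<bar>t\<bar> \<le> \<bar>h\<bar> \<Longrightarrow> (f has_derivative f' (p + t *\<^sub>R v)) (at (p + t *\<^sub>R v))"
    and "\<And>t. \<bar>t\<bar> \<le> \<bar>h\<bar> \<Longrightarrow>
      (f has_derivative f' (p + h *\<^sub>R w + t *\<^sub>R v)) (at (p + h *\<^sub>R w + t *\<^sub>R v))"
  obtains \<xi> where "\<bar>\<xi>\<bar> \<le> \<bar>h\<bar>"
    "f (p + h *\<^sub>R v + h *\<^sub>R w) - f (p + h *\<^sub>R v) - f (p + h *\<^sub>R w) + f p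
       = h * (f' (p + h *\<^sub>R w + \<xi> *\<^sub>R v) v - f' (p + \<xi> *\<^sub>R v) v)"
proof -
  define \<phi> where "\<phi> t = f (p + h *\<^sub>R w + t *\<^sub>R v) - f (p + t *\<^sub>R v)" for t
  define \<phi>' where "\<phi>' t = f' (p + h *\<^sub>R w + t *\<^sub>R v) v - f' (p + t *\<^sub>R v) v" for t
  have \<phi>: "(\<phi> has_real_derivative \<phi>' t) (at t)" if "\<bar>t\<bar> \<le> \<bar>h\<bar>" for t
    unfolding \<phi>_def \<phi>'_def using that
    by (intro DERIV_diff has_real_derivative_along_line assms)
  have "\<exists>\<xi>. \<bar>\<xi>\<bar> \<le> \<bar>h\<bar> \<and> \<phi> h - \<phi> 0 = h * \<phi>' \<xi>"
  proof (cases h "0::real" rule: linorder_cases)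
    case less
    then obtain z where "h < z" "z < 0" "\<phi> 0 - \<phi> h = (0 - h) * \<phi>' z"
      using MVT2[OF less, of \<phi> \<phi>'] \<phi> by auto
    then show ?thesis by (intro exI[of _ z]) (auto simp: algebra_simps)
  next
    case greater
    then obtain z where "0 < z" "z < h" "\<phi> h - \<phi> 0 = (h - 0) * \<phi>' z"
      using MVT2[OF greater, of \<phi> \<phi>'] \<phi> by auto
    then show ?thesis by (intro exI[of _ z]) auto
  qed simp
  then show ?thesis
    using that by (auto simp: \<phi>_def \<phi>'_def algebra_simps)
qed

lemma norm_scaleR_add_le:
  assumes "\<bar>t\<bar> \<le> \<bar>h\<bar>" "\<bar>s\<bar> \<le> \<bar>h\<bar>"
  shows "norm (t *\<^sub>R v + s *\<^sub>R w) \<le> \<bar>h\<bar> * (norm v + norm w)"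
proof -
  have "norm (t *\<^sub>R v + s *\<^sub>R w) \<le> \<bar>t\<bar> * norm v + \<bar>s\<bar> * norm w"
    by (metis norm_scaleR norm_triangle_ineq)
  also have "\<dots> \<le> \<bar>h\<bar> * norm v + \<bar>h\<bar> * norm w"
    using assms by (intro add_mono mult_right_mono) auto
  finally show ?thesis by (simp add: distrib_left)
qed

lemma difference_quotient_estimate:
  fixes g :: "'a::real_normed_vector \<Rightarrow> real"
  assumes Dv: "bounded_linear Dv"
    and remainder: "\<And>y. norm (y - p) < \<delta> \<Longrightarrow> \<bar>g y - g p - Dv (y - p)\<bar> \<le> \<epsilon> * norm (y - p)"
    and "\<epsilon> \<ge> 0" "h \<noteq> 0" "\<bar>\<xi>\<bar> \<le> \<bar>h\<bar>" "\<bar>h\<bar> * (norm v + norm w) < \<delta>"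
  shows "\<bar>(g (p + h *\<^sub>R w + \<xi> *\<^sub>R v) - g (p + \<xi> *\<^sub>R v)) / h - Dv w\<bar> \<le> 2 * \<epsilon> * (norm v + norm w)"
proof -
  interpret Dv: bounded_linear Dv by (rule Dv)
  define K where "K = norm v + norm w"
  define q1 where "q1 = p + h *\<^sub>R w + \<xi> *\<^sub>R v"
  define q2 where "q2 = p + \<xi> *\<^sub>R v"
  have q1: "norm (q1 - p) \<le> \<bar>h\<bar> * K" and q2: "norm (q2 - p) \<le> \<bar>h\<bar> * K"
    using norm_scaleR_add_le[OF \<open>\<bar>\<xi>\<bar> \<le> \<bar>h\<bar>\<close>, of h v w] norm_scaleR_add_le[OF \<open>\<bar>\<xi>\<bar> \<le> \<bar>h\<bar>\<close>, of 0 v w]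
    by (simp_all add: K_def q1_def q2_def algebra_simps)
  \<comment> \<open>the linear parts of the two remainders differ by exactly \<open>h * Dv w\<close>\<close>
  have "g q1 - g q2 - h * Dv w = (g q1 - g p - Dv (q1 - p)) - (g q2 - g p - Dv (q2 - p))"
    by (simp add: q1_def q2_def Dv.add Dv.scaleR algebra_simps)
  then have "\<bar>g q1 - g q2 - h * Dv w\<bar> \<le> \<epsilon> * norm (q1 - p) + \<epsilon> * norm (q2 - p)"
    using remainder[of q1] remainder[of q2] q1 q2 assms(6) by (simp add: K_def)
  also have "\<dots> \<le> \<epsilon> * (\<bar>h\<bar> * K) + \<epsilon> * (\<bar>h\<bar> * K)"
    using q1 q2 \<open>\<epsilon> \<ge> 0\<close> by (intro add_mono mult_left_mono) auto
  also have "\<dots> = \<bar>h\<bar> * (2 * \<epsilon> * K)"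
    by (simp add: algebra_simps)
  finally have "\<bar>g q1 - g q2 - h * Dv w\<bar> \<le> \<bar>h\<bar> * (2 * \<epsilon> * K)" .
  moreover have "\<bar>h\<bar> > 0" using \<open>h \<noteq> 0\<close> by simp
  ultimately have "\<bar>g q1 - g q2 - h * Dv w\<bar> / \<bar>h\<bar> \<le> 2 * \<epsilon> * K"
    by (simp only: pos_divide_le_eq mult.commute[of _ "\<bar>h\<bar>"])
  moreover have "(g q1 - g q2) / h - Dv w = (g q1 - g q2 - h * Dv w) / h"
    using \<open>h \<noteq> 0\<close> by (simp add: field_simps)
  ultimately show ?thesis by (simp add: K_def q1_def q2_def)
qed

lemma second_difference_estimate:
  fixes f :: "'a::real_normed_vector \<Rightarrow> real"
  assumes f': "\<And>q. q \<in> ball p \<rho> \<Longrightarrow> (f has_derivative f' q) (at q)"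
    and Dv: "bounded_linear Dv"
    and remainder: "\<And>y. norm (y - p) < \<delta> \<Longrightarrow> \<bar>f' y v - f' p v - Dv (y - p)\<bar> \<le> \<epsilon> * norm (y - p)"
    and "\<epsilon> \<ge> 0" "h \<noteq> 0" "\<bar>h\<bar> * (norm v + norm w) < min \<delta> \<rho>"
  shows "\<bar>(f (p + h *\<^sub>R v + h *\<^sub>R w) - f (p + h *\<^sub>R v) - f (p + h *\<^sub>R w) + f p) / h\<^sup>2 - Dv w\<bar>
    \<le> 2 * \<epsilon> * (norm v + norm w)"
proof -
  have dist_eq: "dist p (p + x) = norm x" for x
    by (metis add_diff_cancel_left' dist_commute dist_norm)
  have inS: "p + (t *\<^sub>R v + s *\<^sub>R w) \<in> ball p \<rho>" if "\<bar>t\<bar> \<le> \<bar>h\<bar>" "\<bar>s\<bar> \<le> \<bar>h\<bar>" for t s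
    unfolding mem_ball dist_eq using norm_scaleR_add_le[OF that, of v w] assms(6) by simp
  obtain \<xi> where "\<bar>\<xi>\<bar> \<le> \<bar>h\<bar>" and \<xi>:
    "f (p + h *\<^sub>R v + h *\<^sub>R w) - f (p + h *\<^sub>R v) - f (p + h *\<^sub>R w) + f p
       = h * (f' (p + h *\<^sub>R w + \<xi> *\<^sub>R v) v - f' (p + \<xi> *\<^sub>R v) v)"
  proof (rule second_difference_mean_value)
    show "(f has_derivative f' (p + t *\<^sub>R v)) (at (p + t *\<^sub>R v))" if "\<bar>t\<bar> \<le> \<bar>h\<bar>" for t
      using f' inS[OF that, of 0] by simp
    show "(f has_derivative f' (p + h *\<^sub>R w + t *\<^sub>R v)) (at (p + h *\<^sub>R w + t *\<^sub>R v))"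
      if "\<bar>t\<bar> \<le> \<bar>h\<bar>" for t
      using f' inS[OF that, of h] by (simp add: algebra_simps)
  qed
  have "(f (p + h *\<^sub>R v + h *\<^sub>R w) - f (p + h *\<^sub>R v) - f (p + h *\<^sub>R w) + f p) / h\<^sup>2
      = (f' (p + h *\<^sub>R w + \<xi> *\<^sub>R v) v - f' (p + \<xi> *\<^sub>R v) v) / h"
    unfolding \<xi> using \<open>h \<noteq> 0\<close> by (simp add: power2_eq_square)
  with difference_quotient_estimate[where g = "\<lambda>y. f' y v", OF Dv remainder assms(4,5) \<open>\<bar>\<xi>\<bar> \<le> \<bar>h\<bar>\<close>]
  show ?thesis using assms(6) by simp
qed

lemma second_difference_tendsto:
  fixes f :: "'a::real_normed_vector \<Rightarrow> real"
  assumes S: "open S" "p \<in> S"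
    and f': "\<And>q. q \<in> S \<Longrightarrow> (f has_derivative f' q) (at q)"
    and Dv: "((\<lambda>q. f' q v) has_derivative Dv) (at p)"
  shows "((\<lambda>h. (f (p + h *\<^sub>R v + h *\<^sub>R w) - f (p + h *\<^sub>R v) - f (p + h *\<^sub>R w) + f p) / h\<^sup>2)
           \<longlongrightarrow> Dv w) (at 0)"
  unfolding LIM_eq
proof (intro allI impI)
  fix r :: real assume "r > 0"
  obtain \<rho> where \<rho>: "\<rho> > 0" "ball p \<rho> \<subseteq> S" using S openE by blast
  define K where "K = norm v + norm w"
  have "K \<ge> 0" by (simp add: K_def)
  define \<epsilon> where "\<epsilon> = r / (2 * (K + 1))"
  have "\<epsilon> > 0" using \<open>r > 0\<close> \<open>K \<ge> 0\<close> by (simp add: \<epsilon>_def)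
  have "2 * \<epsilon> * K < r"
    using \<open>r > 0\<close> \<open>K \<ge> 0\<close> by (simp add: \<epsilon>_def field_simps)
  obtain \<delta> where \<delta>: "\<delta> > 0"
    "\<And>y. norm (y - p) < \<delta> \<Longrightarrow> \<bar>f' y v - f' p v - Dv (y - p)\<bar> \<le> \<epsilon> * norm (y - p)"
    using Dv \<open>\<epsilon> > 0\<close> unfolding has_derivative_at_alt by force
  show "\<exists>s>0. \<forall>h. h \<noteq> 0 \<and> norm (h - 0) < s \<longrightarrow>
      norm ((f (p + h *\<^sub>R v + h *\<^sub>R w) - f (p + h *\<^sub>R v) - f (p + h *\<^sub>R w) + f p) / h\<^sup>2 - Dv w) < r"
  proof (intro exI[of _ "min \<delta> \<rho> / (K + 1)"] conjI allI impI)
    show "min \<delta> \<rho> / (K + 1) > 0" using \<delta> \<rho> \<open>K \<ge> 0\<close> by simp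
    fix h :: real assume h: "h \<noteq> 0 \<and> norm (h - 0) < min \<delta> \<rho> / (K + 1)"
    then have "\<bar>h\<bar> * (K + 1) < min \<delta> \<rho>" using \<open>K \<ge> 0\<close> by (simp add: pos_less_divide_eq)
    then have "\<bar>h\<bar> * (norm v + norm w) < min \<delta> \<rho>"
      unfolding K_def by (smt (verit) abs_ge_zero mult_left_mono)
    with second_difference_estimate[OF f' has_derivative_bounded_linear[OF Dv] \<delta>(2)] \<rho> \<open>\<epsilon> > 0\<close> h
      \<open>2 * \<epsilon> * K < r\<close>
    show "norm ((f (p + h *\<^sub>R v + h *\<^sub>R w) - f (p + h *\<^sub>R v) - f (p + h *\<^sub>R w) + f p) / h\<^sup>2 - Dv w) < r"
      by (force simp: K_def)
  qed
qed

lemma dir_deriv_commute: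
  fixes f :: "'a::real_normed_vector \<Rightarrow> real"
  assumes S: "open S" "p \<in> S" and f: "\<And>q. q \<in> S \<Longrightarrow> f differentiable (at q)"
    and "dir_deriv v f differentiable (at p)" "dir_deriv w f differentiable (at p)"
  shows "dir_deriv w (dir_deriv v f) p = dir_deriv v (dir_deriv w f) p"
proof -
  define f' where "f' q = frechet_derivative f (at q)" for q
  have f': "(f has_derivative f' q) (at q)" if "q \<in> S" for q
    using f[OF that] unfolding f'_def by (simp add: frechet_derivative_works)
  obtain Dv Dw where Dv: "(dir_deriv v f has_derivative Dv) (at p)"
    and Dw: "(dir_deriv w f has_derivative Dw) (at p)"
    using assms(4,5) unfolding differentiable_def by blast
  have Dv': "((\<lambda>q. f' q v) has_derivative Dv) (at p)"
    by (rule has_derivative_transform_within_open[OF Dv S]) (use dir_deriv_eq[OF f'] in auto)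
  have Dw': "((\<lambda>q. f' q w) has_derivative Dw) (at p)"
    by (rule has_derivative_transform_within_open[OF Dw S]) (use dir_deriv_eq[OF f'] in auto)
  have "((\<lambda>h. (f (p + h *\<^sub>R v + h *\<^sub>R w) - f (p + h *\<^sub>R v) - f (p + h *\<^sub>R w) + f p) / h\<^sup>2)
      \<longlongrightarrow> Dv w) (at 0)"
    using second_difference_tendsto[OF S f' Dv'] .
  moreover have "((\<lambda>h. (f (p + h *\<^sub>R w + h *\<^sub>R v) - f (p + h *\<^sub>R w) - f (p + h *\<^sub>R v) + f p) / h\<^sup>2)
      \<longlongrightarrow> Dw v) (at 0)"
    using second_difference_tendsto[OF S f' Dw'] .
  moreover have "(\<lambda>h. (f (p + h *\<^sub>R w + h *\<^sub>R v) - f (p + h *\<^sub>R w) - f (p + h *\<^sub>R v) + f p) / h\<^sup>2)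
      = (\<lambda>h. (f (p + h *\<^sub>R v + h *\<^sub>R w) - f (p + h *\<^sub>R v) - f (p + h *\<^sub>R w) + f p) / h\<^sup>2)"
    by (simp add: algebra_simps)
  ultimately have "Dv w = Dw v" by (auto intro: tendsto_unique[rotated])
  then show ?thesis using dir_deriv_eq[OF Dv] dir_deriv_eq[OF Dw] by simp
qed

section \<open>Smooth functions on a chart of the slit tangent bundle\<close>

definition coord_dir :: "bool \<Rightarrow> 2 \<Rightarrow> pt" where
  "coord_dir b i = (if b then (0, axis i 1) else (axis i 1, 0))"

lemma pdx_eq_dir_deriv: "pdx i = dir_deriv (axis i 1, 0)"
  by (simp add: fun_eq_iff pdx_def dir_deriv_def)

lemma pdy_eq_dir_deriv: "pdy i = dir_deriv (0, axis i 1)"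
  by (simp add: fun_eq_iff pdy_def dir_deriv_def)

lemma iterd_Cons_dir_deriv: "iterd ((b, i) # os) f = dir_deriv (coord_dir b i) (iterd os f)"
  by (simp add: coord_dir_def pdx_eq_dir_deriv pdy_eq_dir_deriv)

lemma iterd_snoc: "iterd (os @ [(b, i)]) f = iterd os (dir_deriv (coord_dir b i) f)"
  by (induction os) (auto simp: iterd_Cons_dir_deriv simp del: iterd.simps(2))

lemma iterd_cong:
  assumes "open A" "\<And>q. q \<in> A \<Longrightarrow> f q = g q" "q \<in> A"
  shows "iterd os f q = iterd os g q"
  using assms(3)
proof (induction os arbitrary: q)
  case (Cons a os)
  obtain b i where a: "a = (b, i)" by (cases a)
  have "dir_deriv (coord_dir b i) (iterd os f) q = dir_deriv (coord_dir b i) (iterd os g) q"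
    by (rule dir_deriv_cong[OF assms(1) Cons.prems]) (use Cons.IH in auto)
  then show ?case by (simp only: a iterd_Cons_dir_deriv)
qed (use assms in simp)

lemma differentiable_on_cong:
  assumes "open A" "\<And>q. q \<in> A \<Longrightarrow> f q = g q" "f differentiable_on A"
  shows "g differentiable_on A"
  unfolding differentiable_on_eq_differentiable_at[OF assms(1)]
proof
  fix q assume q: "q \<in> A"
  then obtain f' where "(f has_derivative f') (at q)"
    using assms(1,3) unfolding differentiable_on_eq_differentiable_at[OF assms(1)] differentiable_def
    by blast
  then have "(g has_derivative f') (at q)"
    by (rule has_derivative_transform_within_open[OF _ assms(1) q]) (use assms(2) in auto)
  then show "g differentiable at q" unfolding differentiable_def by blast
qed

lemma fsmooth_on_imp_differentiable:
  "open A \<Longrightarrow> fsmooth_on A f \<Longrightarrow> q \<in> A \<Longrightarrow> f differentiable (at q)"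
  unfolding fsmooth_on_def by (metis differentiable_on_eq_differentiable_at iterd.simps(1))

lemma fsmooth_on_dir_deriv: "fsmooth_on A f \<Longrightarrow> fsmooth_on A (dir_deriv (coord_dir b i) f)"
  unfolding fsmooth_on_def by (metis iterd_snoc)

lemma fsmooth_on_pdx: "fsmooth_on A f \<Longrightarrow> fsmooth_on A (pdx i f)"
  using fsmooth_on_dir_deriv[of A f False i] by (simp add: coord_dir_def pdx_eq_dir_deriv)

lemma fsmooth_on_pdy: "fsmooth_on A f \<Longrightarrow> fsmooth_on A (pdy i f)"
  using fsmooth_on_dir_deriv[of A f True i] by (simp add: coord_dir_def pdy_eq_dir_deriv)

lemma fsmooth_on_cong:
  assumes "open A" "\<And>q. q \<in> A \<Longrightarrow> f q = g q" "fsmooth_on A f"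
  shows "fsmooth_on A g"
  unfolding fsmooth_on_def
proof
  fix os
  have "iterd os f q = iterd os g q" if "q \<in> A" for q
    using assms(1,2) that by (rule iterd_cong)
  moreover have "iterd os f differentiable_on A"
    using assms(3) unfolding fsmooth_on_def by blast
  ultimately show "iterd os g differentiable_on A"
    by (rule differentiable_on_cong[OF assms(1)])
qed

lemma fsmooth_on_coinduct:
  assumes A: "open A"
    and diff: "\<And>f. f \<in> K \<Longrightarrow> f differentiable_on A"
    and closed: "\<And>f b i. f \<in> K \<Longrightarrow> \<exists>g\<in>K. \<forall>q\<in>A. dir_deriv (coord_dir b i) f q = g q"
    and "f \<in> K"
  shows "fsmooth_on A f"
proof -
  have "\<forall>f\<in>K. \<exists>g\<in>K. \<forall>q\<in>A. iterd os f q = g q" for os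
  proof (induction os)
    case (Cons a os)
    obtain b i where a: "a = (b, i)" by (cases a)
    show ?case
    proof
      fix f assume "f \<in> K"
      then obtain g where g: "g \<in> K" "\<forall>q\<in>A. iterd os f q = g q" using Cons.IH by blast
      obtain g' where g': "g' \<in> K" "\<forall>q\<in>A. dir_deriv (coord_dir b i) g q = g' q"
        using closed[OF g(1)] by blast
      have "iterd (a # os) f q = g' q" if "q \<in> A" for q
        using dir_deriv_cong[OF A that, of "iterd os f" g] g g' that
        by (simp only: a iterd_Cons_dir_deriv)
      then show "\<exists>g\<in>K. \<forall>q\<in>A. iterd (a # os) f q = g q" using g' by blast
    qed
  qed auto
  then show ?thesis
    unfolding fsmooth_on_def using differentiable_on_cong[OF A] diff \<open>f \<in> K\<close> by metis
qed

lemma fsmooth_on_const: "open A \<Longrightarrow> fsmooth_on A (\<lambda>q. c)"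
  by (rule fsmooth_on_coinduct[where K = "range (\<lambda>c q. c)"]) auto

lemma bounded_linear_snd_nth: "bounded_linear (\<lambda>q::pt. snd q $ i)"
  using bounded_linear_compose[OF bounded_linear_vec_nth[of i] bounded_linear_snd] by simp

lemma differentiable_snd_nth [simp]: "(\<lambda>q::pt. snd q $ i) differentiable (at p)"
  by (rule bounded_linear_imp_differentiable[OF bounded_linear_snd_nth])

lemma dir_deriv_snd_nth: "dir_deriv v (\<lambda>q::pt. snd q $ i) p = snd v $ i"
  using dir_deriv_eq[OF bounded_linear_imp_has_derivative[OF bounded_linear_snd_nth]] .

lemma fsmooth_on_snd_nth:
  assumes "open A" shows "fsmooth_on A (\<lambda>q::pt. snd q $ i)"
proof (rule fsmooth_on_coinduct[where K = "range (\<lambda>c q. c) \<union> range (\<lambda>i q::pt. snd q $ i)"])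
  fix f :: "pt \<Rightarrow> real" and b j
  assume f: "f \<in> range (\<lambda>c q. c) \<union> range (\<lambda>i q::pt. snd q $ i)"
  then show "f differentiable_on A"
    by (auto intro: differentiable_at_imp_differentiable_on)
  show "\<exists>g\<in>range (\<lambda>c q. c) \<union> range (\<lambda>i q::pt. snd q $ i). \<forall>q\<in>A. dir_deriv (coord_dir b j) f q = g q"
    using f by (auto simp: dir_deriv_snd_nth)
qed (use assms in auto)

lemma fsmooth_on_add:
  assumes A: "open A" and "fsmooth_on A f" "fsmooth_on A g"
  shows "fsmooth_on A (\<lambda>q. f q + g q)"
proof (rule fsmooth_on_coinduct[where K = "{h. \<exists>f g. fsmooth_on A f \<and> fsmooth_on A g \<and> h = (\<lambda>q. f q + g q)}"])
  fix h b i assume "h \<in> {h. \<exists>f g. fsmooth_on A f \<and> fsmooth_on A g \<and> h = (\<lambda>q. f q + g q)}"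
  then obtain f g where fg: "fsmooth_on A f" "fsmooth_on A g" "h = (\<lambda>q. f q + g q)" by auto
  show "h differentiable_on A"
    using fg fsmooth_on_imp_differentiable[OF A]
    by (auto simp: differentiable_on_eq_differentiable_at[OF A])
  have "\<forall>q\<in>A. dir_deriv (coord_dir b i) h q
      = dir_deriv (coord_dir b i) f q + dir_deriv (coord_dir b i) g q"
    using fg fsmooth_on_imp_differentiable[OF A] by (auto simp: dir_deriv_add)
  moreover have "(\<lambda>q. dir_deriv (coord_dir b i) f q + dir_deriv (coord_dir b i) g q)
      \<in> {h. \<exists>f g. fsmooth_on A f \<and> fsmooth_on A g \<and> h = (\<lambda>q. f q + g q)}"
    using fg fsmooth_on_dir_deriv by blast
  ultimately show "\<exists>g'\<in>{h. \<exists>f g. fsmooth_on A f \<and> fsmooth_on A g \<and> h = (\<lambda>q. f q + g q)}.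
      \<forall>q\<in>A. dir_deriv (coord_dir b i) h q = g' q"
    by (intro bexI[of _ "\<lambda>q. dir_deriv (coord_dir b i) f q + dir_deriv (coord_dir b i) g q"]) auto
qed (use assms in auto)

text \<open>Smoothness of products: finite sums of products form a class closed under the Leibniz
  rule.\<close>

definition sum_prods :: "((pt \<Rightarrow> real) \<times> (pt \<Rightarrow> real)) list \<Rightarrow> pt \<Rightarrow> real" where
  "sum_prods L q = (\<Sum>x\<leftarrow>L. fst x q * snd x q)"

definition leibniz_terms ::
  "pt \<Rightarrow> ((pt \<Rightarrow> real) \<times> (pt \<Rightarrow> real)) list \<Rightarrow> ((pt \<Rightarrow> real) \<times> (pt \<Rightarrow> real)) list" where
  "leibniz_terms v L = concat (map (\<lambda>x. [(dir_deriv v (fst x), snd x), (fst x, dir_deriv v (snd x))]) L)"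

lemma sum_prods_Nil: "sum_prods [] = (\<lambda>q. 0)"
  and sum_prods_Cons: "sum_prods (a # L) = (\<lambda>q. fst a q * snd a q + sum_prods L q)"
  by (simp_all add: sum_prods_def fun_eq_iff)

lemma differentiable_sum_prods:
  "\<forall>x\<in>set L. fst x differentiable (at q) \<and> snd x differentiable (at q) \<Longrightarrow>
   sum_prods L differentiable (at q)"
proof (induction L)
  case (Cons a L)
  then show ?case unfolding sum_prods_Cons by (auto intro!: differentiable_add differentiable_mult)
qed (simp add: sum_prods_Nil)

lemma dir_deriv_sum_prods:
  "\<forall>x\<in>set L. fst x differentiable (at q) \<and> snd x differentiable (at q) \<Longrightarrow>
   dir_deriv v (sum_prods L) q = sum_prods (leibniz_terms v L) q"
proof (induction L)
  case Nil then show ?case by (simp add: sum_prods_def leibniz_terms_def)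
next
  case (Cons a L)
  then show ?case
    by (simp add: sum_prods_Cons dir_deriv_add dir_deriv_mult differentiable_mult differentiable_sum_prods)
      (simp add: leibniz_terms_def sum_prods_def)
qed

lemma fsmooth_on_mult:
  assumes A: "open A" and "fsmooth_on A f" "fsmooth_on A g"
  shows "fsmooth_on A (\<lambda>q. f q * g q)"
proof -
  define K where "K = {h. \<exists>L. (\<forall>x\<in>set L. fsmooth_on A (fst x) \<and> fsmooth_on A (snd x))
    \<and> (\<forall>q\<in>A. h q = sum_prods L q)}"
  have diff: "\<forall>x\<in>set L. fst x differentiable (at q) \<and> snd x differentiable (at q)"
    if "\<forall>x\<in>set L. fsmooth_on A (fst x) \<and> fsmooth_on A (snd x)" "q \<in> A" for L q
    using that fsmooth_on_imp_differentiable[OF A] by blast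
  show ?thesis
  proof (rule fsmooth_on_coinduct[where K = K])
    fix h b i assume "h \<in> K"
    then obtain L where L: "\<forall>x\<in>set L. fsmooth_on A (fst x) \<and> fsmooth_on A (snd x)"
      "\<forall>q\<in>A. h q = sum_prods L q"
      unfolding K_def by blast
    have "sum_prods L differentiable_on A"
      using differentiable_sum_prods diff[OF L(1)]
      by (simp add: differentiable_on_eq_differentiable_at[OF A])
    then show "h differentiable_on A"
      by (rule differentiable_on_cong[OF A, rotated]) (use L in auto)
    have "\<forall>x\<in>set (leibniz_terms (coord_dir b i) L). fsmooth_on A (fst x) \<and> fsmooth_on A (snd x)"
      using L(1) fsmooth_on_dir_deriv by (auto simp: leibniz_terms_def)
    moreover have "\<forall>q\<in>A. dir_deriv (coord_dir b i) h q = sum_prods (leibniz_terms (coord_dir b i) L) q"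
      using dir_deriv_cong[OF A] L dir_deriv_sum_prods[OF diff[OF L(1)]] by metis
    ultimately show "\<exists>g\<in>K. \<forall>q\<in>A. dir_deriv (coord_dir b i) h q = g q"
      unfolding K_def by blast
  next
    show "(\<lambda>q. f q * g q) \<in> K"
      unfolding K_def using assms by (intro CollectI exI[of _ "[(f, g)]"]) (simp add: sum_prods_def)
  qed (use A in auto)
qed

lemma fsmooth_on_cmult: "open A \<Longrightarrow> fsmooth_on A f \<Longrightarrow> fsmooth_on A (\<lambda>q. c * f q)"
  using fsmooth_on_mult[OF _ fsmooth_on_const] by blast

lemma fsmooth_on_minus: "open A \<Longrightarrow> fsmooth_on A f \<Longrightarrow> fsmooth_on A (\<lambda>q. - f q)"
  using fsmooth_on_cmult[of A f "-1"] by simp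

lemma fsmooth_on_diff:
  "open A \<Longrightarrow> fsmooth_on A f \<Longrightarrow> fsmooth_on A g \<Longrightarrow> fsmooth_on A (\<lambda>q. f q - g q)"
  using fsmooth_on_add[OF _ _ fsmooth_on_minus, of A f g] by simp

lemma fsmooth_on_sum_2:
  "open A \<Longrightarrow> (\<And>j. fsmooth_on A (f j)) \<Longrightarrow> fsmooth_on A (\<lambda>q. \<Sum>j\<in>(UNIV::2 set). f j q)"
  by (simp add: sum_2 fsmooth_on_add)

lemma fsmooth_on_inverse:
  assumes A: "open A" "fsmooth_on A f" "\<And>q. q \<in> A \<Longrightarrow> f q \<noteq> 0"
  shows "fsmooth_on A (\<lambda>q. 1 / f q)"
proof -
  \<comment> \<open>the class of all \<open>g / f\<^sup>n\<close> with \<open>g\<close> smooth is closed under differentiation\<close>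
  define K where "K = {h. \<exists>g n. fsmooth_on A g \<and> h = (\<lambda>q. g q * (1 / f q)^n)}"
  have f_diff: "f differentiable (at q)" if "q \<in> A" for q
    using fsmooth_on_imp_differentiable[OF A(1,2) that] .
  show ?thesis
  proof (rule fsmooth_on_coinduct[where K = K])
    fix h b i assume "h \<in> K"
    then obtain g n where g: "fsmooth_on A g" "h = (\<lambda>q. g q * (1 / f q)^n)" unfolding K_def by blast
    have g_diff: "g differentiable (at q)" if "q \<in> A" for q
      using fsmooth_on_imp_differentiable[OF A(1) g(1) that] .
    show "h differentiable_on A"
      unfolding differentiable_on_eq_differentiable_at[OF A(1)] g(2)
      using g_diff f_diff A(3) by (auto intro!: differentiable_mult differentiable_power differentiable_divide)
    define v where "v = coord_dir b i"
    define g' where "g' q = dir_deriv v g q * f q - real n * g q * dir_deriv v f q" for q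
    have "fsmooth_on A g'"
      unfolding g'_def[abs_def] v_def
      by (intro fsmooth_on_diff fsmooth_on_mult fsmooth_on_cmult fsmooth_on_dir_deriv g A)
    then have K: "(\<lambda>q. g' q * (1 / f q)^(Suc n)) \<in> K"
      unfolding K_def by blast
    have "dir_deriv v h q = g' q * (1 / f q)^(Suc n)" if q: "q \<in> A" for q
    proof -
      have "(\<lambda>q. 1 / f q) differentiable (at q)" using f_diff[OF q] A(3)[OF q] by auto
      then have "dir_deriv v h q
          = dir_deriv v g q * (1 / f q)^n + g q * (real n * (1 / f q)^(n - 1) * (- dir_deriv v f q / (f q)^2))"
        unfolding g(2) using g_diff[OF q] f_diff[OF q] A(3)[OF q]
        by (simp add: dir_deriv_mult dir_deriv_power dir_deriv_inverse differentiable_power)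
      also have "\<dots> = g' q * (1 / f q)^(Suc n)"
        using A(3)[OF q] by (cases n) (simp_all add: g'_def field_simps power2_eq_square)
      finally show ?thesis .
    qed
    then show "\<exists>g\<in>K. \<forall>q\<in>A. dir_deriv (coord_dir b i) h q = g q"
      unfolding v_def by (intro bexI[OF _ K]) simp
  next
    show "(\<lambda>q. 1 / f q) \<in> K"
      unfolding K_def
      by (intro CollectI exI[of _ "\<lambda>q. 1"] exI[of _ 1] conjI fsmooth_on_const A(1)) simp
  qed (use A in auto)
qed

lemma fsmooth_on_divide:
  "open A \<Longrightarrow> fsmooth_on A g \<Longrightarrow> fsmooth_on A f \<Longrightarrow> (\<And>q. q \<in> A \<Longrightarrow> f q \<noteq> 0) \<Longrightarrow>
   fsmooth_on A (\<lambda>q. g q / f q)"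
  using fsmooth_on_mult[OF _ _ fsmooth_on_inverse, of A g f] by simp

section \<open>Coordinate, horizontal and Liouville derivatives\<close>

lemma pdx_add: "f differentiable (at p) \<Longrightarrow> g differentiable (at p) \<Longrightarrow>
    pdx i (\<lambda>q. f q + g q) p = pdx i f p + pdx i g p"
  and pdy_add: "f differentiable (at p) \<Longrightarrow> g differentiable (at p) \<Longrightarrow>
    pdy i (\<lambda>q. f q + g q) p = pdy i f p + pdy i g p"
  and pdx_diff: "f differentiable (at p) \<Longrightarrow> g differentiable (at p) \<Longrightarrow>
    pdx i (\<lambda>q. f q - g q) p = pdx i f p - pdx i g p"
  and pdy_diff: "f differentiable (at p) \<Longrightarrow> g differentiable (at p) \<Longrightarrow>
    pdy i (\<lambda>q. f q - g q) p = pdy i f p - pdy i g p"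
  and pdx_mult: "f differentiable (at p) \<Longrightarrow> g differentiable (at p) \<Longrightarrow>
    pdx i (\<lambda>q. f q * g q) p = pdx i f p * g p + f p * pdx i g p"
  and pdy_mult: "f differentiable (at p) \<Longrightarrow> g differentiable (at p) \<Longrightarrow>
    pdy i (\<lambda>q. f q * g q) p = pdy i f p * g p + f p * pdy i g p"
  and pdx_minus: "f differentiable (at p) \<Longrightarrow> pdx i (\<lambda>q. - f q) p = - pdx i f p"
  and pdy_minus: "f differentiable (at p) \<Longrightarrow> pdy i (\<lambda>q. - f q) p = - pdy i f p"
  and pdx_divide: "f differentiable (at p) \<Longrightarrow> g differentiable (at p) \<Longrightarrow> g p \<noteq> 0 \<Longrightarrow>
    pdx i (\<lambda>q. f q / g q) p = (pdx i f p * g p - f p * pdx i g p) / (g p)^2"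
  and pdy_divide: "f differentiable (at p) \<Longrightarrow> g differentiable (at p) \<Longrightarrow> g p \<noteq> 0 \<Longrightarrow>
    pdy i (\<lambda>q. f q / g q) p = (pdy i f p * g p - f p * pdy i g p) / (g p)^2"
  and pdx_const: "pdx i (\<lambda>q. c) p = 0"
  and pdy_const: "pdy i (\<lambda>q. c) p = 0"
  and pdx_snd_nth: "pdx i (\<lambda>q::pt. snd q $ j) p = 0"
  and pdy_snd_nth: "pdy i (\<lambda>q::pt. snd q $ j) p = (if j = i then 1 else 0)"
  unfolding pdx_eq_dir_deriv pdy_eq_dir_deriv
  by (simp_all add: dir_deriv_add dir_deriv_diff dir_deriv_mult dir_deriv_minus dir_deriv_divide
      dir_deriv_snd_nth axis_def)

lemmas pd_simps = pdx_add pdy_add pdx_diff pdy_diff pdx_mult pdy_mult pdx_minus pdy_minus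
  pdx_divide pdy_divide pdx_const pdy_const pdx_snd_nth pdy_snd_nth

lemma pdx_cong: "open A \<Longrightarrow> p \<in> A \<Longrightarrow> (\<And>q. q \<in> A \<Longrightarrow> f q = g q) \<Longrightarrow> pdx i f p = pdx i g p"
  and pdy_cong: "open A \<Longrightarrow> p \<in> A \<Longrightarrow> (\<And>q. q \<in> A \<Longrightarrow> f q = g q) \<Longrightarrow> pdy i f p = pdy i g p"
  unfolding pdx_eq_dir_deriv pdy_eq_dir_deriv by (rule dir_deriv_cong; assumption)+

lemma pdy_ln_abs:
  "f differentiable (at p) \<Longrightarrow> f p \<noteq> 0 \<Longrightarrow> pdy i (\<lambda>q. ln \<bar>f q\<bar>) p = pdy i f p / f p"
  unfolding pdy_eq_dir_deriv by (rule dir_deriv_ln_abs)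

lemma pdy_base_only: "pdy i (\<lambda>q. c (fst q)) p = 0"
  unfolding pdy_def by simp

lemma pdy_quadratic_form:
  "pdy k (\<lambda>q. \<Sum>i\<in>UNIV. \<Sum>j\<in>UNIV. c (fst q) $ i $ j * snd q $ i * snd q $ j) p
     = (\<Sum>j\<in>UNIV. (c (fst p) $ k $ j + c (fst p) $ j $ k) * snd p $ j)"
proof -
  obtain x y where p: "p = (x, y)" by (cases p)
  have "((\<lambda>t. \<Sum>i\<in>UNIV. \<Sum>j\<in>UNIV. c x $ i $ j * (y + t *\<^sub>R axis k 1) $ i * (y + t *\<^sub>R axis k 1) $ j)
     has_real_derivative (\<Sum>j\<in>UNIV. (c x $ k $ j + c x $ j $ k) * y $ j)) (at 0)"
    using exhaust_2[of k]
    by (auto simp: sum_2 axis_def intro!: derivative_eq_intros) (auto simp: algebra_simps)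
  then show ?thesis unfolding pdy_def p by (intro DERIV_imp_deriv) simp
qed

lemma pdy_linear_form: "pdy k (\<lambda>q. \<Sum>j\<in>UNIV. c (fst q) $ j * snd q $ j) p = c (fst p) $ k"
proof -
  obtain x y where p: "p = (x, y)" by (cases p)
  have "((\<lambda>t. \<Sum>j\<in>UNIV. c x $ j * (y + t *\<^sub>R axis k 1) $ j) has_real_derivative c x $ k) (at 0)"
    using exhaust_2[of k] by (auto simp: sum_2 axis_def intro!: derivative_eq_intros)
  then show ?thesis unfolding pdy_def p by (intro DERIV_imp_deriv) simp
qed

lemma differentiable_pdx: "open A \<Longrightarrow> fsmooth_on A f \<Longrightarrow> q \<in> A \<Longrightarrow> pdx i f differentiable (at q)"
  and differentiable_pdy: "open A \<Longrightarrow> fsmooth_on A f \<Longrightarrow> q \<in> A \<Longrightarrow> pdy i f differentiable (at q)"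
  using fsmooth_on_imp_differentiable fsmooth_on_pdx fsmooth_on_pdy by blast+

lemma pdy_pdx_commute:
  assumes "open A" "fsmooth_on A f" "p \<in> A"
  shows "pdy j (pdx i f) p = pdx i (pdy j f) p"
  using dir_deriv_commute[OF assms(1,3), of f "(axis i 1, 0)" "(0, axis j 1)"]
    fsmooth_on_imp_differentiable[OF assms(1,2)] differentiable_pdx[OF assms] differentiable_pdy[OF assms]
  by (simp add: pdx_eq_dir_deriv pdy_eq_dir_deriv)

lemma pdy_pdy_commute:
  assumes "open A" "fsmooth_on A f" "p \<in> A"
  shows "pdy j (pdy i f) p = pdy i (pdy j f) p"
  using dir_deriv_commute[OF assms(1,3), of f "(0, axis i 1)" "(0, axis j 1)"]
    fsmooth_on_imp_differentiable[OF assms(1,2)] differentiable_pdy[OF assms]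
  by (simp add: pdy_eq_dir_deriv)

lemma hdelta_add: "f differentiable (at q) \<Longrightarrow> g differentiable (at q) \<Longrightarrow>
    hdelta F i (\<lambda>q. f q + g q) q = hdelta F i f q + hdelta F i g q"
  and hdelta_diff: "f differentiable (at q) \<Longrightarrow> g differentiable (at q) \<Longrightarrow>
    hdelta F i (\<lambda>q. f q - g q) q = hdelta F i f q - hdelta F i g q"
  and hdelta_mult: "f differentiable (at q) \<Longrightarrow> g differentiable (at q) \<Longrightarrow>
    hdelta F i (\<lambda>q. f q * g q) q = hdelta F i f q * g q + f q * hdelta F i g q"
  and hdelta_divide: "f differentiable (at q) \<Longrightarrow> g differentiable (at q) \<Longrightarrow> g q \<noteq> 0 \<Longrightarrow>
    hdelta F i (\<lambda>q. f q / g q) q = (hdelta F i f q * g q - f q * hdelta F i g q) / (g q)^2"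
  and hdelta_const: "hdelta F i (\<lambda>q. c) q = 0"
  and hdelta_snd_nth: "hdelta F i (\<lambda>q. snd q $ b) q = - nlconn F b i q"
  using exhaust_2[of b]
  by (auto simp: hdelta_def pd_simps sum_2 algebra_simps field_simps power2_eq_square)

lemma vd1_add: "f differentiable (at q) \<Longrightarrow> g differentiable (at q) \<Longrightarrow>
    vd1 (\<lambda>q. f q + g q) q = vd1 f q + vd1 g q"
  and vd1_diff: "f differentiable (at q) \<Longrightarrow> g differentiable (at q) \<Longrightarrow>
    vd1 (\<lambda>q. f q - g q) q = vd1 f q - vd1 g q"
  and vd1_mult: "f differentiable (at q) \<Longrightarrow> g differentiable (at q) \<Longrightarrow>
    vd1 (\<lambda>q. f q * g q) q = vd1 f q * g q + f q * vd1 g q"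
  and vd1_divide: "f differentiable (at q) \<Longrightarrow> g differentiable (at q) \<Longrightarrow> g q \<noteq> 0 \<Longrightarrow>
    vd1 (\<lambda>q. f q / g q) q = (vd1 f q * g q - f q * vd1 g q) / (g q)^2"
  and vd1_const: "vd1 (\<lambda>q. c) q = 0"
  and vd1_snd_nth: "vd1 (\<lambda>q. snd q $ b) q = snd q $ b"
  using exhaust_2[of b]
  by (auto simp: vd1_def pd_simps sum_2 algebra_simps field_simps power2_eq_square)

lemmas hdelta_vd1_simps = hdelta_add hdelta_diff hdelta_mult hdelta_divide hdelta_const hdelta_snd_nth
  vd1_add vd1_diff vd1_mult vd1_divide vd1_const vd1_snd_nth

lemma hdelta_cong:
  "open A \<Longrightarrow> q \<in> A \<Longrightarrow> (\<And>p. p \<in> A \<Longrightarrow> f p = g p) \<Longrightarrow> hdelta F i f q = hdelta F i g q"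
  unfolding hdelta_def using pdx_cong[of A q f g] pdy_cong[of A q f g] by simp

lemma vd1_cong: "open A \<Longrightarrow> q \<in> A \<Longrightarrow> (\<And>p. p \<in> A \<Longrightarrow> f p = g p) \<Longrightarrow> vd1 f q = vd1 g q"
  unfolding vd1_def using pdy_cong[of A q f g] by simp

lemma vd2_cong:
  "open A \<Longrightarrow> q \<in> A \<Longrightarrow> (\<And>p. p \<in> A \<Longrightarrow> f p = g p) \<Longrightarrow> vd2 F eps m f q = vd2 F eps m g q"
  unfolding vd2_def using pdy_cong[of A q f g] by simp

lemma hdelta_eq_dir_deriv:
  assumes "f differentiable (at p)"
  shows "hdelta F i f p = dir_deriv (axis i 1, - (\<Sum>j\<in>UNIV. nlconn F j i p *\<^sub>R axis j 1)) f p"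
proof -
  interpret linear "\<lambda>v. dir_deriv v f p" by (rule linear_dir_deriv[OF assms])
  have direction: "(axis i 1, - (\<Sum>j\<in>UNIV. nlconn F j i p *\<^sub>R axis j 1))
      = (axis i 1, 0) - (\<Sum>j\<in>UNIV. nlconn F j i p *\<^sub>R (0, axis j 1))"
    by (simp add: sum_2)
  show ?thesis
    unfolding direction diff sum scale by (simp add: hdelta_def pdx_eq_dir_deriv pdy_eq_dir_deriv)
qed

lemma vd1_eq_dir_deriv:
  assumes "f differentiable (at p)"
  shows "vd1 f p = dir_deriv (0, snd p) f p"
proof -
  interpret linear "\<lambda>v. dir_deriv v f p" by (rule linear_dir_deriv[OF assms])
  have direction: "(0, snd p) = (\<Sum>i\<in>UNIV. snd p $ i *\<^sub>R (0::real^2, axis i 1))"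
    by (simp add: sum_2 vec_eq_iff axis_def forall_2)
  show ?thesis
    unfolding direction sum scale by (simp add: vd1_def pdy_eq_dir_deriv)
qed

lemma euler_homogeneous:
  assumes "homog r A f" "p \<in> A" "f differentiable (at p)"
  shows "vd1 f p = r * f p"
proof -
  obtain x y where p: "p = (x, y)" by (cases p)
  have "eventually (\<lambda>t::real. t > -1) (nhds 0)"
    by (rule eventually_nhds_in_open[of "{-1<..}", simplified]) auto
  then have "eventually (\<lambda>t. f (p + t *\<^sub>R (0, y)) = (1 + t) powr r * f p) (nhds 0)"
  proof eventually_elim
    case (elim t)
    have "p + t *\<^sub>R (0, y) = (x, (1 + t) *\<^sub>R y)" by (simp add: p algebra_simps)
    with elim assms(1,2) show ?case by (simp add: homog_def p)
  qed
  moreover have "((\<lambda>t. (1 + t) powr r * f p) has_real_derivative r * f p) (at 0)"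
    using DERIV_fun_powr[of "\<lambda>t. 1 + t" 1 0 r] by (auto intro!: derivative_eq_intros)
  ultimately have "dir_deriv (0, y) f p = r * f p"
    unfolding dir_deriv_def by (subst deriv_cong_ev) (auto intro: DERIV_imp_deriv)
  then show ?thesis using vd1_eq_dir_deriv[OF assms(3)] by (simp add: p)
qed

section \<open>Pseudo-Riemannian surfaces with a Berwald frame\<close>

lemma Fsq_eq_mult: "Fsq F = (\<lambda>q. F q * F q)"
  by (simp add: Fsq_def fun_eq_iff power2_eq_square)

lemma sum_2_kronecker [simp]:
  "(\<Sum>b\<in>UNIV. (X::2 \<Rightarrow> real) b * (if b = j then 1 else 0)) = X j"
  "(\<Sum>b\<in>UNIV. (if j = b then 1 else 0) * (X::2 \<Rightarrow> real) b) = X j"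
  using exhaust_2[of j] by (auto simp: sum_2)

definition adjugate_2x2 :: "real^2^2 \<Rightarrow> 2 \<Rightarrow> 2 \<Rightarrow> real" where
  "adjugate_2x2 M i j = (if i = 1 \<and> j = 1 then M$2$2 else if i = 1 \<and> j = 2 then - M$1$2
     else if i = 2 \<and> j = 1 then - M$2$1 else M$1$1)"

lemma matrix_inv_2x2:
  fixes M :: "real^2^2"
  assumes "det M \<noteq> 0"
  shows "matrix_inv M = (\<chi> i j. adjugate_2x2 M i j / det M)"
proof -
  define B where "B = (\<chi> i j. adjugate_2x2 M i j / det M)"
  have "(\<Sum>k\<in>UNIV. M$i$k * adjugate_2x2 M k j) = (if i = j then det M else 0)"
    "(\<Sum>k\<in>UNIV. adjugate_2x2 M i k * M$k$j) = (if i = j then det M else 0)" for i j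
    using exhaust_2[of i] exhaust_2[of j] by (auto simp: sum_2 adjugate_2x2_def det_2 algebra_simps)
  then have MB: "M ** B = mat 1" "B ** M = mat 1"
    using assms by (auto simp: B_def vec_eq_iff matrix_matrix_mult_def mat_def
        sum_divide_distrib[symmetric])
  then have "\<exists>A'. M ** A' = mat 1 \<and> A' ** M = mat 1" by blast
  then have inv: "M ** matrix_inv M = mat 1 \<and> matrix_inv M ** M = mat 1"
    unfolding matrix_inv_def by (rule someI_ex)
  have "matrix_inv M = matrix_inv M ** (M ** B)" using MB by (simp add: matrix_mul_rid)
  also have "\<dots> = (matrix_inv M ** M) ** B" by (simp add: matrix_mul_assoc)
  also have "\<dots> = B" using inv by (simp add: matrix_mul_lid)
  finally show ?thesis by (simp add: B_def)
qed

lemma sym_product_eq_0: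
  fixes n u :: "2 \<Rightarrow> real"
  assumes "\<And>a b. n a * u b + u a * n b = 0" "u 1 \<noteq> 0 \<or> u 2 \<noteq> 0"
  shows "n a = 0"
proof -
  obtain c where c: "u c \<noteq> 0" using assms(2) by blast
  with assms(1)[of c c] have "n c = 0" by (simp add: mult.commute)
  with assms(1)[of a c] c show ?thesis by simp
qed

lemma sum_inverse_contract:
  fixes h g :: "2 \<Rightarrow> 2 \<Rightarrow> real" and X :: "2 \<Rightarrow> real"
  assumes "\<And>l b. (\<Sum>c\<in>UNIV. h c l * g c b) = (if l = b then 1 else 0)"
  shows "(\<Sum>c\<in>UNIV. (\<Sum>l\<in>UNIV. h c l * X l) * g c b) = X b"
proof -
  have "(\<Sum>c\<in>UNIV. (\<Sum>l\<in>UNIV. h c l * X l) * g c b)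
      = X 1 * (\<Sum>c\<in>UNIV. h c 1 * g c b) + X 2 * (\<Sum>c\<in>UNIV. h c 2 * g c b)"
    by (simp add: sum_2 algebra_simps)
  also have "\<dots> = X b" using exhaust_2[of b] by (auto simp: assms)
  finally show ?thesis .
qed

lemma sum_2_swap:
  fixes X Z :: "2 \<Rightarrow> real" and Y :: "2 \<Rightarrow> 2 \<Rightarrow> real"
  shows "(\<Sum>c\<in>UNIV. (\<Sum>b\<in>UNIV. X b * Y b c) * Z c) = (\<Sum>b\<in>UNIV. X b * (\<Sum>c\<in>UNIV. Y b c * Z c))"
  by (simp add: sum_2 algebra_simps)

lemma sum_inverse_sandwich:
  fixes h g G :: "2 \<Rightarrow> 2 \<Rightarrow> real"
  assumes gh: "\<And>e l. (\<Sum>c\<in>UNIV. g e c * h c l) = (if e = l then 1 else 0)"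
    and hg: "\<And>k e. (\<Sum>b\<in>UNIV. h k b * g b e) = (if k = e then 1 else 0)"
  shows "(\<Sum>c\<in>UNIV. (\<Sum>b\<in>UNIV. h k b * (\<Sum>e\<in>UNIV. G e b * g e c + G e c * g b e)) * h c l)
     = (\<Sum>b\<in>UNIV. h k b * G l b) + (\<Sum>c\<in>UNIV. G k c * h c l)"
proof -
  have "(\<Sum>c\<in>UNIV. (\<Sum>b\<in>UNIV. h k b * (\<Sum>e\<in>UNIV. G e b * g e c + G e c * g b e)) * h c l)
     = (\<Sum>b\<in>UNIV. \<Sum>e\<in>UNIV. h k b * G e b * (\<Sum>c\<in>UNIV. g e c * h c l))
       + (\<Sum>c\<in>UNIV. \<Sum>e\<in>UNIV. (\<Sum>b\<in>UNIV. h k b * g b e) * G e c * h c l)"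
    by (simp add: sum_2 algebra_simps)
  also have "\<dots> = (\<Sum>b\<in>UNIV. h k b * G l b) + (\<Sum>c\<in>UNIV. G k c * h c l)"
    unfolding gh hg using exhaust_2[of k] exhaust_2[of l] by (auto simp: sum_2)
  finally show ?thesis .
qed

locale riemannian_frame =
  fixes A :: "pt set" and F :: "pt \<Rightarrow> real" and eps :: real and m :: "2 \<Rightarrow> pt \<Rightarrow> real"
  assumes riemannian: "pseudo_riemannian A F" and frame: "berwald_frame A F eps m"
begin

lemma open_A: "open A"
  and fsmooth_F: "fsmooth_on A F"
  and homog_F: "homog 1 A F"
  and F_nonzero: "q \<in> A \<Longrightarrow> F q \<noteq> 0"
  and det_gmat_nonzero: "q \<in> A \<Longrightarrow> det (gmat F q) \<noteq> 0"
  using riemannian by (simp_all add: pseudo_riemannian_def pseudo_finsler_def conic_set_def)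

lemma fsmooth_m: "fsmooth_on A (m i)"
  and gmet_frame: "q \<in> A \<Longrightarrow> gmet F a b q = pdy a F q * pdy b F q + eps * m a q * m b q"
  and eps_nonzero: "eps \<noteq> 0"
  using frame by (auto simp: berwald_frame_def ell_lo_def)

lemma eps_cases: "eps = 1 \<or> eps = -1"
  using frame by (simp add: berwald_frame_def)

lemma eps_square: "eps * eps = 1"
  using eps_cases by auto

lemma differentiable_F [simp]: "q \<in> A \<Longrightarrow> F differentiable (at q)"
  and differentiable_m [simp]: "q \<in> A \<Longrightarrow> m i differentiable (at q)"
  and differentiable_ell [simp]: "q \<in> A \<Longrightarrow> pdy a F differentiable (at q)"
  using fsmooth_on_imp_differentiable[OF open_A] differentiable_pdy[OF open_A] fsmooth_F fsmooth_m
  by blast+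

definition quad_coeffs :: "real^2 \<Rightarrow> real^2^2" where
  "quad_coeffs = (SOME a. \<forall>x y. (x,y) \<in> A \<longrightarrow> (F (x,y))\<^sup>2 = (\<Sum>i\<in>UNIV. \<Sum>j\<in>UNIV. a x $ i $ j * y $ i * y $ j))"

lemma Fsq_eq_quad_coeffs:
  assumes "q \<in> A"
  shows "Fsq F q = (\<Sum>i\<in>UNIV. \<Sum>j\<in>UNIV. quad_coeffs (fst q) $ i $ j * snd q $ i * snd q $ j)"
proof -
  have "\<exists>a. \<forall>x y. (x,y) \<in> A \<longrightarrow> (F (x,y))\<^sup>2 = (\<Sum>i\<in>UNIV. \<Sum>j\<in>UNIV. a x $ i $ j * y $ i * y $ j)"
    using riemannian by (simp add: pseudo_riemannian_def)
  then have "\<forall>x y. (x,y) \<in> A \<longrightarrow>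
      (F (x,y))\<^sup>2 = (\<Sum>i\<in>UNIV. \<Sum>j\<in>UNIV. quad_coeffs x $ i $ j * y $ i * y $ j)"
    unfolding quad_coeffs_def by (rule someI_ex)
  then show ?thesis using assms by (cases q) (simp add: Fsq_def)
qed

lemma pdy_Fsq_eq_quad_coeffs:
  assumes q: "q \<in> A"
  shows "pdy l (Fsq F) q
    = (\<Sum>j\<in>UNIV. (quad_coeffs (fst q) $ l $ j + quad_coeffs (fst q) $ j $ l) * snd q $ j)"
  using pdy_cong[OF open_A q Fsq_eq_quad_coeffs] pdy_quadratic_form by simp

lemma gmet_eq_quad_coeffs:
  assumes q: "q \<in> A"
  shows "gmet F a b q = (quad_coeffs (fst q) $ a $ b + quad_coeffs (fst q) $ b $ a) / 2"
proof -
  define c where "c x = (\<chi> j. quad_coeffs x $ b $ j + quad_coeffs x $ j $ b)" for x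
  have "pdy a (pdy b (Fsq F)) q = pdy a (\<lambda>q. \<Sum>j\<in>UNIV. c (fst q) $ j * snd q $ j) q"
    by (rule pdy_cong[OF open_A q]) (simp add: pdy_Fsq_eq_quad_coeffs c_def)
  also have "\<dots> = c (fst q) $ a" by (rule pdy_linear_form)
  finally show ?thesis by (simp add: gmet_def c_def)
qed

lemma gmet_sym: "q \<in> A \<Longrightarrow> gmet F a b q = gmet F b a q"
  by (simp add: gmet_eq_quad_coeffs)

lemma pdy_gmet [simp]: "q \<in> A \<Longrightarrow> pdy c (gmet F a b) q = 0"
  using pdy_cong[OF open_A _ gmet_eq_quad_coeffs]
    pdy_base_only[of c "\<lambda>x. (quad_coeffs x $ a $ b + quad_coeffs x $ b $ a) / 2"]
  by simp

lemma Fsq_eq_gmet: "q \<in> A \<Longrightarrow> Fsq F q = (\<Sum>a\<in>UNIV. \<Sum>b\<in>UNIV. gmet F a b q * snd q $ a * snd q $ b)"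
  by (simp add: Fsq_eq_quad_coeffs gmet_eq_quad_coeffs sum_2 field_simps)

lemma pdy_Fsq_eq_gmet: "q \<in> A \<Longrightarrow> pdy l (Fsq F) q = 2 * (\<Sum>b\<in>UNIV. gmet F l b q * snd q $ b)"
  by (simp add: pdy_Fsq_eq_quad_coeffs gmet_eq_quad_coeffs sum_2 field_simps)

lemma fsmooth_Fsq: "fsmooth_on A (Fsq F)"
  unfolding Fsq_eq_mult by (intro fsmooth_on_mult open_A fsmooth_F)

lemma fsmooth_gmet: "fsmooth_on A (gmet F a b)"
proof -
  have "gmet F a b = (\<lambda>q. 1/2 * pdy a (pdy b (Fsq F)) q)" by (simp add: fun_eq_iff gmet_def)
  then show ?thesis by (simp only:) (intro fsmooth_on_cmult open_A fsmooth_on_pdy fsmooth_Fsq)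
qed

lemma differentiable_gmet [simp]: "q \<in> A \<Longrightarrow> gmet F a b differentiable (at q)"
  and differentiable_pdx_gmet [simp]: "q \<in> A \<Longrightarrow> pdx k (gmet F a b) differentiable (at q)"
  using fsmooth_on_imp_differentiable[OF open_A] differentiable_pdx[OF open_A] fsmooth_gmet by blast+

definition gdet :: "pt \<Rightarrow> real" where
  "gdet q = gmet F 1 1 q * gmet F 2 2 q - gmet F 1 2 q * gmet F 2 1 q"

definition gadj :: "2 \<Rightarrow> 2 \<Rightarrow> pt \<Rightarrow> real" where
  "gadj i j q = adjugate_2x2 (gmat F q) i j"

lemma gdet_nonzero: "q \<in> A \<Longrightarrow> gdet q \<noteq> 0"
  using det_gmat_nonzero by (simp add: gdet_def det_2 gmat_def)

lemma fsmooth_gdet: "fsmooth_on A gdet"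
  unfolding gdet_def[abs_def] by (intro fsmooth_on_diff fsmooth_on_mult fsmooth_gmet open_A)

lemma ginv_eq_gadj: "q \<in> A \<Longrightarrow> ginv F i j q = gadj i j q / gdet q"
  using matrix_inv_2x2[OF det_gmat_nonzero] by (simp add: ginv_def gadj_def gmat_def gdet_def det_2)

lemma gadj_cases:
  "gadj i j q = (if i = 1 \<and> j = 1 then gmet F 2 2 q else if i = 1 \<and> j = 2 then - gmet F 1 2 q
     else if i = 2 \<and> j = 1 then - gmet F 2 1 q else gmet F 1 1 q)"
  by (simp add: gadj_def adjugate_2x2_def gmat_def)

lemma fsmooth_ginv: "fsmooth_on A (ginv F i j)"
proof (rule fsmooth_on_cong[OF open_A])
  show "fsmooth_on A (\<lambda>q. gadj i j q / gdet q)"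
    using exhaust_2[of i] exhaust_2[of j]
    by (intro fsmooth_on_divide open_A fsmooth_gdet gdet_nonzero)
      (auto simp: gadj_cases fsmooth_gmet fsmooth_on_minus[OF open_A fsmooth_gmet])
qed (simp add: ginv_eq_gadj)

lemma differentiable_ginv [simp]: "q \<in> A \<Longrightarrow> ginv F i j differentiable (at q)"
  using fsmooth_on_imp_differentiable[OF open_A fsmooth_ginv] .

lemma gadj_gmet: "q \<in> A \<Longrightarrow> (\<Sum>b\<in>UNIV. gadj a b q * gmet F b c q) = (if a = c then gdet q else 0)"
  and gmet_gadj: "q \<in> A \<Longrightarrow> (\<Sum>b\<in>UNIV. gmet F a b q * gadj b c q) = (if a = c then gdet q else 0)"
  using exhaust_2[of a] exhaust_2[of c] gmet_sym[of q 1 2]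
  by (auto simp: gadj_cases gdet_def sum_2 algebra_simps)

lemma ginv_gmet: "q \<in> A \<Longrightarrow> (\<Sum>b\<in>UNIV. ginv F a b q * gmet F b c q) = (if a = c then 1 else 0)"
  and gmet_ginv: "q \<in> A \<Longrightarrow> (\<Sum>b\<in>UNIV. gmet F a b q * ginv F b c q) = (if a = c then 1 else 0)"
  using gadj_gmet gmet_gadj gdet_nonzero
  by (simp_all add: ginv_eq_gadj sum_divide_distrib[symmetric])

lemma ginv_sym:
  assumes q: "q \<in> A" shows "ginv F a b q = ginv F b a q"
  using exhaust_2[of a] exhaust_2[of b] gmet_sym[OF q, of 2 1]
  by (elim disjE) (simp_all add: ginv_eq_gadj[OF q] gadj_cases)

lemma ginv_gmet_transposed:
  "q \<in> A \<Longrightarrow> (\<Sum>c\<in>UNIV. ginv F c l q * gmet F c b q) = (if l = b then 1 else 0)"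
  using ginv_gmet[where a = l and c = b] by (simp add: ginv_sym)

lemma pdy_ginv [simp]: "q \<in> A \<Longrightarrow> pdy c (ginv F a b) q = 0"
proof -
  assume q: "q \<in> A"
  have "pdy c (ginv F a b) q = pdy c (\<lambda>q. gadj a b q / gdet q) q"
    by (rule pdy_cong[OF open_A q]) (simp add: ginv_eq_gadj)
  also have "\<dots> = 0"
    using exhaust_2[of a] exhaust_2[of b] q gdet_nonzero[OF q]
    by (auto simp: gadj_cases gdet_def[abs_def] pd_simps)
  finally show ?thesis .
qed

lemma pdx_Fsq_eq_gmet:
  assumes q: "q \<in> A"
  shows "pdx l (Fsq F) q = (\<Sum>a\<in>UNIV. \<Sum>b\<in>UNIV. pdx l (gmet F a b) q * snd q $ a * snd q $ b)"
  using pdx_cong[OF open_A q Fsq_eq_gmet, where i = l] q by (simp add: sum_2 pd_simps)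

lemma pdx_pdy_Fsq_eq_gmet:
  assumes q: "q \<in> A"
  shows "pdx k (pdy l (Fsq F)) q = 2 * (\<Sum>b\<in>UNIV. pdx k (gmet F l b) q * snd q $ b)"
  using pdx_cong[OF open_A q pdy_Fsq_eq_gmet, where i = k] q by (simp add: sum_2 pd_simps)

lemma pdx_gmet_sym: "q \<in> A \<Longrightarrow> pdx k (gmet F a b) q = pdx k (gmet F b a) q"
  by (rule pdx_cong[OF open_A]) (auto simp: gmet_sym)

lemma pdy_pdx_gmet [simp]: "q \<in> A \<Longrightarrow> pdy k (pdx i (gmet F a b)) q = 0"
  by (simp add: pdy_pdx_commute[OF open_A fsmooth_gmet] pdx_cong[OF open_A _ pdy_gmet] pdx_const)

definition christoffel :: "2 \<Rightarrow> 2 \<Rightarrow> 2 \<Rightarrow> pt \<Rightarrow> real" where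
  "christoffel c i a q = 1/2 * (\<Sum>l\<in>UNIV. ginv F c l q *
     (pdx i (gmet F l a) q + pdx a (gmet F l i) q - pdx l (gmet F i a) q))"

lemma fsmooth_christoffel: "fsmooth_on A (christoffel c i a)"
  unfolding christoffel_def[abs_def]
  by (intro fsmooth_on_cmult fsmooth_on_sum_2 fsmooth_on_mult fsmooth_on_add fsmooth_on_diff
      fsmooth_on_pdx fsmooth_gmet fsmooth_ginv open_A)

lemma differentiable_christoffel [simp]: "q \<in> A \<Longrightarrow> christoffel c i a differentiable (at q)"
  using fsmooth_on_imp_differentiable[OF open_A fsmooth_christoffel] .

lemma christoffel_sym: "q \<in> A \<Longrightarrow> christoffel c i a q = christoffel c a i q"
  unfolding christoffel_def by (simp add: pdx_gmet_sym[of q _ i a] algebra_simps)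

lemma pdy_christoffel [simp]: "q \<in> A \<Longrightarrow> pdy k (christoffel c i a) q = 0"
  unfolding christoffel_def[abs_def] by (simp add: sum_2 pd_simps)

lemma spray_eq_christoffel:
  "q \<in> A \<Longrightarrow> spray F j q = 1/2 * (\<Sum>a\<in>UNIV. \<Sum>b\<in>UNIV. christoffel j a b q * snd q $ a * snd q $ b)"
  by (simp add: spray_def pdx_Fsq_eq_gmet pdx_pdy_Fsq_eq_gmet christoffel_def sum_2 algebra_simps)

lemma nlconn_eq_christoffel:
  assumes q: "q \<in> A"
  shows "nlconn F j i q = (\<Sum>k\<in>UNIV. christoffel j i k q * snd q $ k)"
proof -
  have "nlconn F j i q
      = pdy i (\<lambda>q. 1/2 * (\<Sum>a\<in>UNIV. \<Sum>b\<in>UNIV. christoffel j a b q * snd q $ a * snd q $ b)) q"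
    unfolding nlconn_def by (rule pdy_cong[OF open_A q]) (simp add: spray_eq_christoffel)
  then show ?thesis
    using q exhaust_2[of i] christoffel_sym[OF q, of j 1 2]
    by (auto simp: sum_2 pd_simps algebra_simps)
qed

lemma fsmooth_nlconn: "fsmooth_on A (nlconn F j i)"
proof (rule fsmooth_on_cong[OF open_A])
  show "fsmooth_on A (\<lambda>q. \<Sum>k\<in>UNIV. christoffel j i k q * snd q $ k)"
    by (intro fsmooth_on_sum_2 fsmooth_on_mult fsmooth_christoffel fsmooth_on_snd_nth open_A)
qed (simp add: nlconn_eq_christoffel)

lemma differentiable_nlconn [simp]: "q \<in> A \<Longrightarrow> nlconn F j i differentiable (at q)"
  using fsmooth_on_imp_differentiable[OF open_A fsmooth_nlconn] .

lemma pdy_nlconn: "q \<in> A \<Longrightarrow> pdy k (nlconn F j i) q = christoffel j i k q"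
  using pdy_cong[OF open_A _ nlconn_eq_christoffel] exhaust_2[of k] by (auto simp: sum_2 pd_simps)

lemma sum_y_nlconn: "q \<in> A \<Longrightarrow> (\<Sum>i\<in>UNIV. snd q $ i * nlconn F j i q) = 2 * spray F j q"
  by (simp add: nlconn_eq_christoffel spray_eq_christoffel sum_2 algebra_simps)

lemma pdx_gmet_eq_christoffel:
  assumes q: "q \<in> A"
  shows "pdx i (gmet F a b) q
    = (\<Sum>c\<in>UNIV. christoffel c i a q * gmet F c b q + christoffel c i b q * gmet F a c q)"
proof -
  define X where "X a l = pdx i (gmet F l a) q + pdx a (gmet F l i) q - pdx l (gmet F i a) q" for a l
  have lower: "(\<Sum>c\<in>UNIV. christoffel c i a q * gmet F c b q) = 1/2 * X a b" for a b
  proof -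
    have "(\<Sum>c\<in>UNIV. christoffel c i a q * gmet F c b q)
        = (\<Sum>c\<in>UNIV. 1/2 * ((\<Sum>l\<in>UNIV. ginv F c l q * X a l) * gmet F c b q))"
      by (rule sum.cong) (simp_all add: christoffel_def X_def)
    also have "\<dots> = 1/2 * (\<Sum>c\<in>UNIV. (\<Sum>l\<in>UNIV. ginv F c l q * X a l) * gmet F c b q)"
      by (rule sum_distrib_left[symmetric])
    finally show ?thesis
      using sum_inverse_contract[of "\<lambda>c l. ginv F c l q" "\<lambda>c b. gmet F c b q", OF ginv_gmet_transposed[OF q]]
      by simp
  qed
  have "(\<Sum>c\<in>UNIV. christoffel c i b q * gmet F a c q) = 1/2 * X b a"
    using lower[of b a] by (simp add: gmet_sym[OF q, of a])
  then have "(\<Sum>c\<in>UNIV. christoffel c i a q * gmet F c b q + christoffel c i b q * gmet F a c q)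
      = 1/2 * X a b + 1/2 * X b a"
    by (simp only: sum.distrib lower)
  also have "\<dots> = pdx i (gmet F a b) q"
    using pdx_gmet_sym[OF q, of i b a] pdx_gmet_sym[OF q, of a b i] pdx_gmet_sym[OF q, of b i a]
    by (simp add: X_def field_simps)
  finally show ?thesis by simp
qed

lemma pdx_ginv:
  assumes q: "q \<in> A"
  shows "pdx i (ginv F k l) q =
    - ((\<Sum>b\<in>UNIV. ginv F k b q * christoffel l i b q) + (\<Sum>c\<in>UNIV. christoffel k i c q * ginv F c l q))"
proof -
  define P where "P b = pdx i (ginv F k b) q" for b
  \<comment> \<open>differentiate \<open>g\<^sup>k\<^sup>b g\<^sub>b\<^sub>c = \<delta>\<^sup>k\<^sub>c\<close>\<close>
  have S: "(\<Sum>b\<in>UNIV. P b * gmet F b c q) = - (\<Sum>b\<in>UNIV. ginv F k b q * pdx i (gmet F b c) q)" for c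
  proof -
    have "pdx i (\<lambda>q. \<Sum>b\<in>UNIV. ginv F k b q * gmet F b c q) q = pdx i (\<lambda>q. if k = c then 1 else 0) q"
      by (rule pdx_cong[OF open_A q]) (simp add: ginv_gmet)
    then show ?thesis using q by (simp add: sum_2 pd_simps P_def algebra_simps)
  qed
  have "P l = (\<Sum>c\<in>UNIV. (\<Sum>b\<in>UNIV. P b * gmet F b c q) * ginv F c l q)"
    by (simp only: sum_2_swap gmet_ginv[OF q] sum_2_kronecker)
  also have "\<dots> = - (\<Sum>c\<in>UNIV. (\<Sum>b\<in>UNIV. ginv F k b q * (\<Sum>e\<in>UNIV.
      christoffel e i b q * gmet F e c q + christoffel e i c q * gmet F b e q)) * ginv F c l q)"
    by (simp add: S sum_negf pdx_gmet_eq_christoffel[OF q])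
  also have "\<dots> = - ((\<Sum>b\<in>UNIV. ginv F k b q * christoffel l i b q)
      + (\<Sum>c\<in>UNIV. christoffel k i c q * ginv F c l q))"
    using sum_inverse_sandwich[where h = "\<lambda>a b. ginv F a b q" and g = "\<lambda>a b. gmet F a b q"
        and G = "\<lambda>a b. christoffel a i b q", OF gmet_ginv[OF q] ginv_gmet[OF q]] by simp
  finally show ?thesis by (simp add: P_def)
qed

lemma F_mult_ell: "q \<in> A \<Longrightarrow> F q * pdy a F q = (\<Sum>b\<in>UNIV. gmet F a b q * snd q $ b)"
  using pdy_Fsq_eq_gmet[of q a] by (simp add: Fsq_eq_mult pd_simps)

lemma ell_eq_gmet: "q \<in> A \<Longrightarrow> pdy a F q = (\<Sum>b\<in>UNIV. gmet F a b q * snd q $ b) / F q"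
  using F_mult_ell F_nonzero by (simp add: field_simps)

lemma vd1_F: "q \<in> A \<Longrightarrow> vd1 F q = F q"
  using euler_homogeneous[OF homog_F] by simp

lemma m_nonzero:
  assumes q: "q \<in> A" shows "m 1 q \<noteq> 0 \<or> m 2 q \<noteq> 0"
proof (rule ccontr)
  assume "\<not> (m 1 q \<noteq> 0 \<or> m 2 q \<noteq> 0)"
  then have "det (gmat F q) = 0" using gmet_frame[OF q] by (simp add: det_2 gmat_def)
  then show False using det_gmat_nonzero[OF q] by simp
qed

lemma m_orthogonal_y: "q \<in> A \<Longrightarrow> (\<Sum>l\<in>UNIV. m l q * snd q $ l) = 0"
proof -
  assume q: "q \<in> A"
  have "eps * m a q * (\<Sum>l\<in>UNIV. m l q * snd q $ l) = 0" for a
  proof -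
    have "F q * pdy a F q = pdy a F q * (\<Sum>b\<in>UNIV. pdy b F q * snd q $ b)
        + eps * m a q * (\<Sum>l\<in>UNIV. m l q * snd q $ l)"
      using F_mult_ell[OF q, of a] gmet_frame[OF q] by (simp add: sum_2 algebra_simps)
    then show ?thesis using vd1_F[OF q] by (simp add: vd1_def mult.commute)
  qed
  then show ?thesis using m_nonzero[OF q] eps_nonzero by auto
qed

lemma fsmooth_m_up: "fsmooth_on A (m_up F m k)"
  unfolding m_up_def[abs_def] by (intro fsmooth_on_sum_2 fsmooth_on_mult fsmooth_ginv fsmooth_m open_A)

lemma differentiable_m_up [simp]: "q \<in> A \<Longrightarrow> m_up F m k differentiable (at q)"
  using fsmooth_on_imp_differentiable[OF open_A fsmooth_m_up] .

lemma m_up_orthogonal_ell: "q \<in> A \<Longrightarrow> (\<Sum>j\<in>UNIV. m_up F m j q * pdy j F q) = 0"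
proof -
  assume q: "q \<in> A"
  have "F q * (\<Sum>j\<in>UNIV. m_up F m j q * pdy j F q) = (\<Sum>j\<in>UNIV. m_up F m j q * (F q * pdy j F q))"
    by (simp add: sum_distrib_left algebra_simps)
  also have "\<dots> = (\<Sum>j\<in>UNIV. (\<Sum>l\<in>UNIV. ginv F j l q * m l q) * (\<Sum>b\<in>UNIV. gmet F j b q * snd q $ b))"
    by (simp add: m_up_def F_mult_ell[OF q])
  also have "\<dots> = (\<Sum>l\<in>UNIV. m l q * (\<Sum>b\<in>UNIV. (\<Sum>j\<in>UNIV. ginv F j l q * gmet F j b q) * snd q $ b))"
    by (simp add: sum_2 algebra_simps)
  also have "\<dots> = 0"
    by (simp add: ginv_gmet_transposed[OF q] m_orthogonal_y[OF q])
  finally show ?thesis using F_nonzero[OF q] by simp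
qed

lemma main_scalar_zero: "q \<in> A \<Longrightarrow> main_scalar F m q = 0"
proof -
  assume q: "q \<in> A"
  have "cartan F i j k q = 0" for i j k
  proof -
    have "pdy j (pdy k (Fsq F)) = (\<lambda>p. 2 * gmet F j k p)" by (simp add: fun_eq_iff gmet_def)
    then show ?thesis using q by (simp add: cartan_def pd_simps)
  qed
  moreover obtain a where "m a q \<noteq> 0" using m_nonzero[OF q] by blast
  ultimately show ?thesis
    unfolding main_scalar_def by (rule_tac the_equality) (auto dest: spec[of _ a])
qed

lemma hdelta_gmet: "hdelta F i (gmet F a b) q = pdx i (gmet F a b) q"
  and hdelta_ginv: "hdelta F i (ginv F a b) q = pdx i (ginv F a b) q"
  and vd1_gmet: "vd1 (gmet F a b) q = 0"
  and vd1_ginv: "vd1 (ginv F a b) q = 0"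
  if "q \<in> A"
  using that by (simp_all add: hdelta_def vd1_def)

lemma hdelta_F: "q \<in> A \<Longrightarrow> hdelta F i F q = 0"
proof -
  assume q: "q \<in> A"
  have "hdelta F i (Fsq F) q = 0"
    using q gmet_sym[OF q, of 2 1]
    by (simp add: hdelta_def pdx_Fsq_eq_gmet pdy_Fsq_eq_gmet pdx_gmet_eq_christoffel
        nlconn_eq_christoffel sum_2 algebra_simps)
  moreover have "hdelta F i (Fsq F) q = 2 * F q * hdelta F i F q"
    using q by (simp add: Fsq_eq_mult hdelta_vd1_simps)
  ultimately show ?thesis using F_nonzero[OF q] by simp
qed

lemma pdx_F: "q \<in> A \<Longrightarrow> pdx i F q = (\<Sum>j\<in>UNIV. nlconn F j i q * pdy j F q)"
  using hdelta_F by (simp add: hdelta_def)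

lemma hdelta_ell:
  assumes q: "q \<in> A"
  shows "hdelta F i (pdy a F) q = (\<Sum>c\<in>UNIV. christoffel c i a q * pdy c F q)"
proof -
  have "hdelta F i (\<lambda>q. \<Sum>b\<in>UNIV. gmet F a b q * snd q $ b) q
      = (\<Sum>b\<in>UNIV. pdx i (gmet F a b) q * snd q $ b) - (\<Sum>b\<in>UNIV. gmet F a b q * nlconn F b i q)"
    using q by (simp add: sum_2 hdelta_vd1_simps hdelta_gmet algebra_simps)
  also have "\<dots> = (\<Sum>c\<in>UNIV. christoffel c i a q * (\<Sum>b\<in>UNIV. gmet F c b q * snd q $ b))"
    using q by (simp add: pdx_gmet_eq_christoffel nlconn_eq_christoffel sum_2 algebra_simps)
  finally have numerator: "hdelta F i (\<lambda>q. \<Sum>b\<in>UNIV. gmet F a b q * snd q $ b) q = \<dots>" .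
  have "hdelta F i (pdy a F) q = hdelta F i (\<lambda>q. (\<Sum>b\<in>UNIV. gmet F a b q * snd q $ b) / F q) q"
    by (rule hdelta_cong[OF open_A q]) (simp add: ell_eq_gmet)
  also have "\<dots> = hdelta F i (\<lambda>q. \<Sum>b\<in>UNIV. gmet F a b q * snd q $ b) q / F q"
    using q F_nonzero[OF q] hdelta_F[OF q] by (simp add: hdelta_vd1_simps power2_eq_square)
  also have "\<dots> = (\<Sum>c\<in>UNIV. christoffel c i a q * pdy c F q)"
    using F_nonzero[OF q] by (simp only: numerator) (simp add: ell_eq_gmet[OF q] sum_2 field_simps)
  finally show ?thesis .
qed

lemma vd1_ell:
  assumes q: "q \<in> A"
  shows "vd1 (pdy a F) q = 0"
proof -
  have "vd1 (pdy a F) q = vd1 (\<lambda>q. (\<Sum>b\<in>UNIV. gmet F a b q * snd q $ b) / F q) q"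
    by (rule vd1_cong[OF open_A q]) (simp add: ell_eq_gmet)
  also have "\<dots> = 0"
    using q F_nonzero[OF q] vd1_F[OF q] by (simp add: hdelta_vd1_simps sum_2 vd1_gmet power2_eq_square)
  finally show ?thesis .
qed

text \<open>Both derivatives of \<open>m\<^sub>a\<close> are read off from those of \<open>g\<^sub>a\<^sub>b = \<ell>\<^sub>a\<ell>\<^sub>b + \<epsilon> m\<^sub>a m\<^sub>b\<close>:
  a symmetric product \<open>n\<^sub>a m\<^sub>b + m\<^sub>a n\<^sub>b\<close> vanishes only for \<open>n = 0\<close>.\<close>

lemma hdelta_m:
  assumes q: "q \<in> A"
  shows "hdelta F i (m a) q = (\<Sum>c\<in>UNIV. christoffel c i a q * m c q)"
proof -
  define n where "n a = hdelta F i (m a) q - (\<Sum>c\<in>UNIV. christoffel c i a q * m c q)" for a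
  have "n a * m b q + m a q * n b = 0" for a b
  proof -
    have "hdelta F i (gmet F a b) q = hdelta F i (\<lambda>q. pdy a F q * pdy b F q + eps * m a q * m b q) q"
      by (rule hdelta_cong[OF open_A q]) (simp add: gmet_frame)
    also have "\<dots> = hdelta F i (pdy a F) q * pdy b F q + pdy a F q * hdelta F i (pdy b F) q
        + eps * (hdelta F i (m a) q * m b q + m a q * hdelta F i (m b) q)"
      using q by (simp add: hdelta_vd1_simps algebra_simps)
    finally have "eps * (hdelta F i (m a) q * m b q + m a q * hdelta F i (m b) q)
        = pdx i (gmet F a b) q - hdelta F i (pdy a F) q * pdy b F q - pdy a F q * hdelta F i (pdy b F) q"
      using hdelta_gmet[OF q, of i a b] by linarith
    also have "\<dots> = eps * (\<Sum>c\<in>UNIV. christoffel c i a q * m c q * m b q + christoffel c i b q * m a q * m c q)"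
      using q by (simp add: pdx_gmet_eq_christoffel hdelta_ell gmet_frame sum_2 algebra_simps)
    finally have "hdelta F i (m a) q * m b q + m a q * hdelta F i (m b) q
        = (\<Sum>c\<in>UNIV. christoffel c i a q * m c q * m b q + christoffel c i b q * m a q * m c q)"
      using eps_nonzero by simp
    then show ?thesis by (simp add: n_def sum_2 algebra_simps)
  qed
  then have "n a = 0" by (rule sym_product_eq_0[OF _ m_nonzero[OF q]])
  then show ?thesis by (simp add: n_def)
qed

lemma vd1_m:
  assumes q: "q \<in> A"
  shows "vd1 (m a) q = 0"
proof -
  have "vd1 (m a) q * m b q + m a q * vd1 (m b) q = 0" for a b
  proof -
    have "0 = vd1 (gmet F a b) q" using q by (simp add: vd1_gmet)
    also have "\<dots> = vd1 (\<lambda>q. pdy a F q * pdy b F q + eps * m a q * m b q) q"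
      by (rule vd1_cong[OF open_A q]) (simp add: gmet_frame)
    also have "\<dots> = eps * (vd1 (m a) q * m b q + m a q * vd1 (m b) q)"
      using q by (simp add: hdelta_vd1_simps vd1_ell algebra_simps)
    finally show ?thesis using eps_nonzero by simp
  qed
  then show ?thesis by (rule sym_product_eq_0[OF _ m_nonzero[OF q]])
qed

lemma hdelta_m_up:
  "q \<in> A \<Longrightarrow> hdelta F i (m_up F m k) q = - (\<Sum>j\<in>UNIV. christoffel k i j q * m_up F m j q)"
  unfolding m_up_def[abs_def]
  by (simp add: sum_2 hdelta_vd1_simps hdelta_ginv pdx_ginv hdelta_m algebra_simps)

lemma vd1_m_up: "q \<in> A \<Longrightarrow> vd1 (m_up F m k) q = 0"
  unfolding m_up_def[abs_def] by (simp add: sum_2 hdelta_vd1_simps vd1_ginv vd1_m)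

lemma fsmooth_hdelta: "fsmooth_on A f \<Longrightarrow> fsmooth_on A (hdelta F i f)"
  unfolding hdelta_def[abs_def]
  by (intro fsmooth_on_diff fsmooth_on_sum_2 fsmooth_on_mult fsmooth_on_pdx fsmooth_on_pdy fsmooth_nlconn open_A)

lemma fsmooth_vd2: "fsmooth_on A f \<Longrightarrow> fsmooth_on A (vd2 F eps m f)"
  unfolding vd2_def[abs_def]
  by (intro fsmooth_on_mult fsmooth_on_cmult fsmooth_on_sum_2 fsmooth_on_pdy fsmooth_m_up fsmooth_F open_A)

lemma hdelta_vd2_commute:
  assumes f: "fsmooth_on A f" and q: "q \<in> A"
  shows "hdelta F i (vd2 F eps m f) q = vd2 F eps m (hdelta F i f) q"
proof -
  have "hdelta F i (vd2 F eps m f) q - vd2 F eps m (hdelta F i f) q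
     = eps * F q * (\<Sum>k\<in>UNIV. pdy k f q *
         (hdelta F i (m_up F m k) q + (\<Sum>j\<in>UNIV. christoffel k i j q * m_up F m j q)))"
    unfolding vd2_def[abs_def] hdelta_def[abs_def]
    using q differentiable_pdx[OF open_A f q] differentiable_pdy[OF open_A f q]
    by (simp add: pd_simps sum_2 pdx_F pdy_nlconn pdy_pdx_commute[OF open_A f q]
        pdy_pdy_commute[OF open_A f q] algebra_simps)
  then show ?thesis using q by (simp add: hdelta_m_up)
qed

lemma vd1_vd2_commute:
  assumes f: "fsmooth_on A f" and q: "q \<in> A"
  shows "vd1 (vd2 F eps m f) q = vd2 F eps m (vd1 f) q"
proof -
  have "vd1 (vd2 F eps m f) q - vd2 F eps m (vd1 f) q =
     eps * (\<Sum>k\<in>UNIV. pdy k f q * m_up F m k q) * (vd1 F q - F q)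
     + eps * F q * (\<Sum>k\<in>UNIV. pdy k f q * vd1 (m_up F m k) q)"
    unfolding vd2_def[abs_def] vd1_def[abs_def] using q differentiable_pdy[OF open_A f q]
    by (simp add: pd_simps sum_2 pdy_pdy_commute[OF open_A f q] algebra_simps)
  then show ?thesis using q by (simp add: vd1_F vd1_m_up)
qed

lemma vd2_hd1:
  assumes f: "fsmooth_on A f" and q: "q \<in> A"
  shows "vd2 F eps m (hd1 F f) q = hd2 F eps m f q + hd1 F (vd2 F eps m f) q"
proof -
  have "vd2 F eps m (hd1 F f) q =
     eps * (\<Sum>i\<in>UNIV. m_up F m i q * hdelta F i f q)
     - eps * (\<Sum>i\<in>UNIV. snd q $ i * hdelta F i f q) * (\<Sum>j\<in>UNIV. m_up F m j q * pdy j F q) / F q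
     + (\<Sum>i\<in>UNIV. snd q $ i / F q * vd2 F eps m (hdelta F i f) q)"
    unfolding vd2_def hd1_def[abs_def] ell_up_def
    using q fsmooth_on_imp_differentiable[OF open_A fsmooth_hdelta[OF f] q] F_nonzero[OF q]
    by (simp add: pd_simps sum_2 field_simps power2_eq_square)
  then show ?thesis
    using q by (simp add: m_up_orthogonal_ell hdelta_vd2_commute[OF f q] hd2_def hd1_def ell_up_def
        sum_distrib_left)
qed

lemma cc_S_horizontally_constant:
  assumes q: "q \<in> A" and hdelta: "\<And>i. hdelta F i f q = 0" and vd1: "vd1 f q = 0"
  shows "cc_S F eps m phi f q = - 2 * eps * cc_Q F eps m phi q / F q * vd2 F eps m f q"
proof -
  have "cc_S F eps m phi f q =
     (\<Sum>j\<in>UNIV. pdy j f q * ((\<Sum>i\<in>UNIV. snd q $ i * nlconn F j i q) - 2 * spray F j q))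
     - 2 * cc_Q F eps m phi q * (\<Sum>i\<in>UNIV. m_up F m i q * pdy i f q)
     - 2 * cc_P F eps m phi q / F q * vd1 f q"
    using hdelta F_nonzero[OF q]
    by (simp add: cc_S_def hdelta_def cc_spray_def ell_up_def vd1_def sum_2 field_simps)
  \<comment> \<open>\<open>y\<^sup>i N\<^sup>j\<^sub>i = 2 G\<^sup>j\<close> removes the first sum, and the \<open>P\<close>-term is a multiple of \<open>f\<^sub>;\<^sub>1 = 0\<close>\<close>
  also have "\<dots> = - 2 * eps * cc_Q F eps m phi q / F q * vd2 F eps m f q"
    using F_nonzero[OF q] by (simp add: sum_y_nlconn[OF q] vd1 vd2_def eps_square)
  finally show ?thesis .
qed

end

section \<open>The anisotropic conformal change\<close>

text \<open>Since \<open>\<I> = 0\<close> for a Riemannian \<open>F\<close>, the main scalar of \<open>Fbar\<close> depends only on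
  \<open>(\<phi>\<^sub>;\<^sub>2, \<phi>\<^sub>;\<^sub>2\<^sub>;\<^sub>2, \<phi>\<^sub>;\<^sub>2\<^sub>;\<^sub>2\<^sub>;\<^sub>2)\<close>: with \<open>D = \<phi>\<^sub>;\<^sub>2\<^sub>;\<^sub>2 + \<phi>\<^sub>;\<^sub>2\<^sup>2 + \<epsilon> = 1/\<rho>\<close> one has
  \<open>(ln \<rho>)\<^sub>;\<^sub>2 = -(\<phi>\<^sub>;\<^sub>2\<^sub>;\<^sub>2\<^sub>;\<^sub>2 + 2\<phi>\<^sub>;\<^sub>2\<phi>\<^sub>;\<^sub>2\<^sub>;\<^sub>2)/D\<close>.\<close>

definition reduced_main_scalar :: "real \<Rightarrow> real \<times> real \<times> real \<Rightarrow> real" where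
  "reduced_main_scalar e z = sqrt (e * (1 / (fst (snd z) + fst z * fst z + e))) *
     (2 * e * fst z + e / 2 * (snd (snd z) + 2 * fst z * fst (snd z)) / (fst (snd z) + fst z * fst z + e))"

lemma differentiable_reduced_main_scalar:
  assumes "fst (snd z) + fst z * fst z + e \<noteq> 0" "e * (1 / (fst (snd z) + fst z * fst z + e)) > 0"
  shows "reduced_main_scalar e differentiable (at z)"
proof -
  have coords: "(\<lambda>z::real \<times> real \<times> real. fst z) differentiable (at z)"
    "(\<lambda>z::real \<times> real \<times> real. fst (snd z)) differentiable (at z)"
    "(\<lambda>z::real \<times> real \<times> real. snd (snd z)) differentiable (at z)"
    by (intro bounded_linear_imp_differentiable bounded_linear_fst
        bounded_linear_compose[OF bounded_linear_fst bounded_linear_snd]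
        bounded_linear_compose[OF bounded_linear_snd bounded_linear_snd])+
  have "sqrt differentiable (at (e * (1 / (fst (snd z) + fst z * fst z + e))))"
    using assms(2) DERIV_real_sqrt real_differentiable_def by blast
  moreover have "(\<lambda>z::real \<times> real \<times> real. e * (1 / (fst (snd z) + fst z * fst z + e))) differentiable (at z)"
    using coords assms(1) by (auto intro!: differentiable_mult differentiable_divide differentiable_add)
  ultimately have "(\<lambda>z. sqrt (e * (1 / (fst (snd z) + fst z * fst z + e)))) differentiable (at z)"
    by (rule differentiable_compose[of sqrt])
  moreover have "(\<lambda>z. 2 * e * fst z + e / 2 * (snd (snd z) + 2 * fst z * fst (snd z))
      / (fst (snd z) + fst z * fst z + e)) differentiable (at z)"
    using coords assms(1) by (auto intro!: differentiable_mult differentiable_divide differentiable_add)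
  ultimately show ?thesis
    unfolding reduced_main_scalar_def[abs_def] by (rule differentiable_mult)
qed

locale conformal_change = riemannian_frame +
  fixes phi :: "pt \<Rightarrow> real"
  assumes conf_factor: "conf_factor A F eps m phi"
    and phi2_horiz_const: "horiz_const A F (vd2 F eps m phi)"
begin

lemma fsmooth_phi: "fsmooth_on A phi"
  and homog_phi: "homog 0 A phi"
  and rho_pos: "q \<in> A \<Longrightarrow> eps * cc_rho F eps m phi q > 0"
  using conf_factor by (simp_all add: conf_factor_def)

definition phi2 where "phi2 = vd2 F eps m phi"
definition phi22 where "phi22 = vd2 F eps m phi2"
definition phi222 where "phi222 = vd2 F eps m phi22"

lemma fsmooth_phi2: "fsmooth_on A phi2"
  and fsmooth_phi22: "fsmooth_on A phi22"
  and fsmooth_phi222: "fsmooth_on A phi222"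
  unfolding phi2_def phi22_def phi222_def by (intro fsmooth_vd2 fsmooth_phi)+

lemma differentiable_phi2 [simp]: "q \<in> A \<Longrightarrow> phi2 differentiable (at q)"
  and differentiable_phi22 [simp]: "q \<in> A \<Longrightarrow> phi22 differentiable (at q)"
  and differentiable_phi222 [simp]: "q \<in> A \<Longrightarrow> phi222 differentiable (at q)"
  using fsmooth_on_imp_differentiable[OF open_A] fsmooth_phi2 fsmooth_phi22 fsmooth_phi222 by blast+

lemma vd2_eq_0: "q \<in> A \<Longrightarrow> (\<And>p. p \<in> A \<Longrightarrow> f p = 0) \<Longrightarrow> vd2 F eps m f q = 0"
  using vd2_cong[OF open_A, of q f "\<lambda>p. 0"] by (simp add: vd2_def pd_simps)

lemma hdelta_phi2: "q \<in> A \<Longrightarrow> hdelta F i phi2 q = 0"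
  and hdelta_phi22: "q \<in> A \<Longrightarrow> hdelta F i phi22 q = 0"
  and hdelta_phi222: "q \<in> A \<Longrightarrow> hdelta F i phi222 q = 0"
proof -
  show h2: "q \<in> A \<Longrightarrow> hdelta F i phi2 q = 0" for q i
    using phi2_horiz_const by (simp add: horiz_const_def phi2_def)
  show h22: "q \<in> A \<Longrightarrow> hdelta F i phi22 q = 0" for q i
    unfolding phi22_def using hdelta_vd2_commute[OF fsmooth_phi2] vd2_eq_0 h2 by simp
  show "q \<in> A \<Longrightarrow> hdelta F i phi222 q = 0"
    unfolding phi222_def using hdelta_vd2_commute[OF fsmooth_phi22] vd2_eq_0 h22 by simp
qed

lemma vd1_phi2: "q \<in> A \<Longrightarrow> vd1 phi2 q = 0"
  and vd1_phi22: "q \<in> A \<Longrightarrow> vd1 phi22 q = 0"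
  and vd1_phi222: "q \<in> A \<Longrightarrow> vd1 phi222 q = 0"
proof -
  have "vd1 phi q = 0" if "q \<in> A" for q
    using euler_homogeneous[OF homog_phi that] fsmooth_on_imp_differentiable[OF open_A fsmooth_phi that]
    by simp
  then show v2: "q \<in> A \<Longrightarrow> vd1 phi2 q = 0" for q
    unfolding phi2_def using vd1_vd2_commute[OF fsmooth_phi] vd2_eq_0 by simp
  then show v22: "q \<in> A \<Longrightarrow> vd1 phi22 q = 0" for q
    unfolding phi22_def using vd1_vd2_commute[OF fsmooth_phi2] vd2_eq_0 by simp
  then show "q \<in> A \<Longrightarrow> vd1 phi222 q = 0"
    unfolding phi222_def using vd1_vd2_commute[OF fsmooth_phi22] vd2_eq_0 by simp
qed

lemma cc_Q_eq:
  assumes q: "q \<in> A"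
  shows "cc_Q F eps m phi q
    = 1/2 * (eps * cc_rho F eps m phi q * (F q)\<^sup>2 * (phi2 q * hd1 F phi q - hd2 F eps m phi q))"
proof -
  have "hd1 F phi2 q = 0" using q by (simp add: hd1_def hdelta_phi2)
  then have "vd2 F eps m (hd1 F phi) q = hd2 F eps m phi q"
    using vd2_hd1[OF fsmooth_phi q] by (simp add: phi2_def)
  then show ?thesis by (simp add: cc_Q_def phi2_def algebra_simps)
qed

definition rho_denom where "rho_denom q = phi22 q + phi2 q * phi2 q + eps" for q

lemma cc_rho_eq: "q \<in> A \<Longrightarrow> cc_rho F eps m phi q = 1 / rho_denom q"
  by (simp add: cc_rho_def cc_sigma_def main_scalar_zero rho_denom_def phi2_def phi22_def
      power2_eq_square)

lemma rho_denom_nonzero: "q \<in> A \<Longrightarrow> rho_denom q \<noteq> 0"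
  using rho_pos cc_rho_eq by fastforce

lemma vd2_ln_rho:
  assumes q: "q \<in> A"
  shows "vd2 F eps m (\<lambda>q. ln \<bar>cc_rho F eps m phi q\<bar>) q
    = - (phi222 q + 2 * phi2 q * phi22 q) / rho_denom q"
proof -
  have D: "rho_denom differentiable (at q)"
    using q by (simp add: rho_denom_def[abs_def])
  have "(\<lambda>q. ln \<bar>rho_denom q\<bar>) differentiable (at q)"
    using differentiable_compose[of "\<lambda>y. ln \<bar>y\<bar>", OF _ D] DERIV_ln_abs[OF rho_denom_nonzero[OF q]]
      real_differentiable_def by blast
  then have pdy_ln: "pdy i (\<lambda>q. - ln \<bar>rho_denom q\<bar>) q = - pdy i rho_denom q / rho_denom q" for i
    using D rho_denom_nonzero[OF q] by (simp add: pd_simps pdy_ln_abs)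
  have "vd2 F eps m (\<lambda>q. ln \<bar>cc_rho F eps m phi q\<bar>) q = vd2 F eps m (\<lambda>q. - ln \<bar>rho_denom q\<bar>) q"
    by (rule vd2_cong[OF open_A q]) (simp add: cc_rho_eq rho_denom_nonzero ln_div)
  also have "\<dots> = - vd2 F eps m rho_denom q / rho_denom q"
    using rho_denom_nonzero[OF q] by (simp add: vd2_def pdy_ln sum_2 field_simps)
  also have "vd2 F eps m rho_denom q = vd2 F eps m phi22 q + 2 * phi2 q * vd2 F eps m phi2 q"
    using q by (simp add: vd2_def rho_denom_def[abs_def] pd_simps sum_2 algebra_simps)
  finally show ?thesis by (simp add: phi222_def[symmetric] phi22_def[symmetric])
qed

lemma cc_Ibar_eq:
  assumes q: "q \<in> A"
  shows "cc_Ibar F eps m phi q = reduced_main_scalar eps (phi2 q, phi22 q, phi222 q)"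
proof -
  have reduced: "reduced_main_scalar eps (phi2 q, phi22 q, phi222 q) = sqrt (eps * (1 / rho_denom q)) *
      (2 * eps * phi2 q + eps / 2 * (phi222 q + 2 * phi2 q * phi22 q) / rho_denom q)"
    by (simp add: reduced_main_scalar_def rho_denom_def)
  have Ibar: "cc_Ibar F eps m phi q = sqrt (eps * (1 / rho_denom q)) *
      (0 + 2 * eps * phi2 q - eps / 2 * (- (phi222 q + 2 * phi2 q * phi22 q) / rho_denom q))"
    using q by (simp add: cc_Ibar_def cc_rho_eq main_scalar_zero vd2_ln_rho phi2_def[symmetric])
  show ?thesis unfolding reduced Ibar using rho_denom_nonzero[OF q] by (simp add: field_simps)
qed

lemma differentiable_reduced_main_scalar_at:
  "q \<in> A \<Longrightarrow> reduced_main_scalar eps differentiable (at (phi2 q, phi22 q, phi222 q))"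
  using differentiable_reduced_main_scalar rho_denom_nonzero rho_pos cc_rho_eq
  by (simp add: rho_denom_def)

lemma differentiable_reduced_Ibar:
  assumes q: "q \<in> A"
  shows "(\<lambda>q. reduced_main_scalar eps (phi2 q, phi22 q, phi222 q)) differentiable (at q)"
  using differentiable_compose[where f = "reduced_main_scalar eps" and g = "\<lambda>q. (phi2 q, phi22 q, phi222 q)",
      OF differentiable_reduced_main_scalar_at[OF q]] q
  by (simp add: differentiable_Pair)

lemma dir_deriv_reduced_Ibar:
  assumes q: "q \<in> A"
    and "dir_deriv v phi2 q = 0" "dir_deriv v phi22 q = 0" "dir_deriv v phi222 q = 0"
  shows "dir_deriv v (\<lambda>q. reduced_main_scalar eps (phi2 q, phi22 q, phi222 q)) q = 0"
proof -
  obtain d2 d22 d222 where d: "(phi2 has_derivative d2) (at q)" "(phi22 has_derivative d22) (at q)"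
    "(phi222 has_derivative d222) (at q)"
    using q differentiable_phi2 differentiable_phi22 differentiable_phi222
    unfolding differentiable_def by metis
  show ?thesis
  proof (rule dir_deriv_compose_eq_0[where \<Phi> = "reduced_main_scalar eps"
        and g = "\<lambda>q. (phi2 q, phi22 q, phi222 q)" and g' = "\<lambda>x. (d2 x, d22 x, d222 x)"])
    show "((\<lambda>q. (phi2 q, phi22 q, phi222 q)) has_derivative (\<lambda>x. (d2 x, d22 x, d222 x))) (at q)"
      using d by (intro has_derivative_Pair)
    show "(d2 v, d22 v, d222 v) = 0"
      using assms(2-4) dir_deriv_eq[OF d(1)] dir_deriv_eq[OF d(2)] dir_deriv_eq[OF d(3)]
      by (simp add: zero_prod_def)
    show "reduced_main_scalar eps differentiable (at (phi2 q, phi22 q, phi222 q))"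
      by (rule differentiable_reduced_main_scalar_at[OF q])
  qed
qed

lemma hdelta_cc_Ibar:
  assumes q: "q \<in> A"
  shows "hdelta F i (cc_Ibar F eps m phi) q = 0"
proof -
  note hdelta_dir = hdelta_eq_dir_deriv[where F = F and i = i]
  have "hdelta F i (cc_Ibar F eps m phi) q
      = hdelta F i (\<lambda>q. reduced_main_scalar eps (phi2 q, phi22 q, phi222 q)) q"
    by (rule hdelta_cong[OF open_A q cc_Ibar_eq])
  also have "\<dots> = 0"
    unfolding hdelta_dir[OF differentiable_reduced_Ibar[OF q]]
    using hdelta_dir[OF differentiable_phi2[OF q]] hdelta_dir[OF differentiable_phi22[OF q]]
      hdelta_dir[OF differentiable_phi222[OF q]]
      hdelta_phi2[OF q, of i] hdelta_phi22[OF q, of i] hdelta_phi222[OF q, of i]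
    by (intro dir_deriv_reduced_Ibar[OF q]) linarith+
  finally show ?thesis .
qed

lemma vd1_cc_Ibar:
  assumes q: "q \<in> A"
  shows "vd1 (cc_Ibar F eps m phi) q = 0"
proof -
  have "vd1 (cc_Ibar F eps m phi) q = vd1 (\<lambda>q. reduced_main_scalar eps (phi2 q, phi22 q, phi222 q)) q"
    by (rule vd1_cong[OF open_A q cc_Ibar_eq])
  also have "\<dots> = 0"
    unfolding vd1_eq_dir_deriv[OF differentiable_reduced_Ibar[OF q]]
    using vd1_eq_dir_deriv[OF differentiable_phi2[OF q]] vd1_eq_dir_deriv[OF differentiable_phi22[OF q]]
      vd1_eq_dir_deriv[OF differentiable_phi222[OF q]] vd1_phi2[OF q] vd1_phi22[OF q] vd1_phi222[OF q]
    by (intro dir_deriv_reduced_Ibar[OF q]) linarith+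
  finally show ?thesis .
qed

lemma cc_S_cc_Ibar:
  assumes q: "q \<in> A"
  shows "cc_S F eps m phi (cc_Ibar F eps m phi) q
    = - cc_rho F eps m phi q * F q * (phi2 q * hd1 F phi q - hd2 F eps m phi q)
        * vd2 F eps m (cc_Ibar F eps m phi) q"
proof -
  have "cc_S F eps m phi (cc_Ibar F eps m phi) q
      = - 2 * eps * cc_Q F eps m phi q / F q * vd2 F eps m (cc_Ibar F eps m phi) q"
    by (rule cc_S_horizontally_constant[OF q hdelta_cc_Ibar[OF q] vd1_cc_Ibar[OF q]])
  also have "\<dots> = - cc_rho F eps m phi q * F q * (phi2 q * hd1 F phi q - hd2 F eps m phi q)
        * vd2 F eps m (cc_Ibar F eps m phi) q"
    using F_nonzero[OF q] eps_cases by (auto simp: cc_Q_eq[OF q] power2_eq_square field_simps)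
  finally show ?thesis .
qed

lemma landsberg_iff:
  "landsberg_cc A F eps m phi \<longleftrightarrow>
    (\<forall>p\<in>A. vd2 F eps m (cc_Ibar F eps m phi) p = 0 \<or>
            vd2 F eps m phi p * hd1 F phi p = hd2 F eps m phi p)"
proof -
  have "cc_S F eps m phi (cc_Ibar F eps m phi) p = 0 \<longleftrightarrow>
      vd2 F eps m (cc_Ibar F eps m phi) p = 0 \<or> vd2 F eps m phi p * hd1 F phi p = hd2 F eps m phi p"
    if p: "p \<in> A" for p
    using rho_pos[OF p] F_nonzero[OF p] unfolding cc_S_cc_Ibar[OF p] phi2_def by auto
  then show ?thesis unfolding landsberg_cc_def by blast
qed

end

theorem proposition4p7:
  fixes A :: "pt set" and F phi :: "pt \<Rightarrow> real" and eps :: real and m :: "2 \<Rightarrow> pt \<Rightarrow> real"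
  assumes "pseudo_riemannian A F"
    and "berwald_frame A F eps m"
    and "conf_factor A F eps m phi"
    and "horiz_const A F (vd2 F eps m phi)"
  shows "landsberg_cc A F eps m phi \<longleftrightarrow>
    (\<forall>p\<in>A. vd2 F eps m (cc_Ibar F eps m phi) p = 0 \<or>
            vd2 F eps m phi p * hd1 F phi p = hd2 F eps m phi p)"
proof -
  interpret conformal_change A F eps m phi
    using assms by unfold_locales
  show ?thesis by (rule landsberg_iff)
qed

end
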